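(* Let $V$ be a nonlocal vertex algebra and let $\mathcal S(x)$ be a unitary rational quantum Yang–Baxter operator on $V$. Then: (a) $\mathcal S(x)(\mathbf 1\otimes v)=\mathbf 1\otimes v$ for all $v\in V$ if and only if $\mathcal S(x)(v\otimes\mathbf 1)=v\otimes\mathbf 1$ for all $v\in V$; (b) $[\mathcal D\otimes1,\mathcal S(x)]=-\frac{d}{dx}\mathcal S(x)$ if and only if $[1\otimes\mathcal D,\mathcal S^{-1}(x)]=\frac{d}{dx}\mathcal S^{-1}(x)$; (c) $\mathcal S(x_1)(Y(x_2)\otimes1)=(Y(x_2)\otimes1)\mathcal S^{23}(x_1)\mathcal S^{13}(x_1+x_2)$ if and only if $\mathcal S(x_1)(1\otimes Y(x_2))=(1\otimes Y(x_2))\mathcal S^{12}(x_1-x_2)\mathcal S^{13}(x_1)$.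
   Context: All vector spaces are over $\mathbb{C}$. A nonlocal vertex algebra is a vector space $V$ with a linear map $Y(\cdot,x):V\to \mathrm{Hom}(V,V((x)))$, $v\mapsto Y(v,x)=\sum_{n\in\mathbb Z}v_nx^{-n-1}$, and a vector $\mathbf 1\in V$ such that for all $v$: $Y(\mathbf 1,x)v=v$, $Y(v,x)\mathbf 1\in V[[x]]$, $\lim_{x\to0}Y(v,x)\mathbf 1=v$; and for all $u,v,w$ there is $k\ge0$ with $(x_0+x_2)^kY(u,x_0+x_2)Y(v,x_2)w=(x_0+x_2)^kY(Y(u,x_0)v,x_2)w$. Write $Y(x):V\otimes V\to V((x))$, $Y(x)(u\otimes v)=Y(u,x)v$, and $\mathcal Dv=v_{-2}\mathbf 1$. Conventions: $f(x_1\pm x_2)$ for $f\in\mathbb C((x))$ is expanded in nonnegative powers of the second variable; for a linear map $T$ on a tensor product, $T^{ij}$ denotes $T$ acting on the $i$-th and $j$-th tensor factors (identity elsewhere); maps are extended linearly over scalar formal series. A rational quantum Yang–Baxter operator on $V$ is a linear map $\mathcal S(x):V\otimes V\to V\otimes V\otimes\mathbb C((x))$ with $\mathcal S^{12}(x)\mathcal S^{13}(x+z)\mathcal S^{23}(z)=\mathcal S^{23}(z)\mathcal S^{13}(x+z)\mathcal S^{12}(x)$; it is unitary if $\mathcal S(x)\mathcal S^{21}(-x)=1$, where $\mathcal S^{21}(x)=\sigma\mathcal S(x)\sigma$ with $\sigma$ the flip on $V\otimes V$. Then $\mathcal S^{-1}(x)=\mathcal S^{21}(-x)$ denotes the inverse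 of the $\mathbb C((x))$-linear extension of $\mathcal S(x)$. *)

theory Defs
  imports "HOL-Library.Poly_Mapping" "HOL-Computational_Algebra.Formal_Laurent_Series"
begin

(* Vector spaces are modelled in coordinates with respect to a basis indexed by a type 'b:
  V = 'b \<Rightarrow>\<^sub>0 complex,  V\<otimes>V = ('b \<times> 'b) \<Rightarrow>\<^sub>0 complex,  V\<otimes>V\<otimes>V = ('b \<times> 'b \<times> 'b) \<Rightarrow>\<^sub>0 complex.
  Tensoring with a ring R of scalar series is done by taking coefficients in R, e.g.
  V\<otimes>V\<otimes>C((x)) = ('b \<times> 'b) \<Rightarrow>\<^sub>0 complex fls, and C((x))((z)) = complex fls fls
  (outer variable z, inner variable x). *)

definition smul :: "'r::comm_ring_1 \<Rightarrow> ('i \<Rightarrow>\<^sub>0 'r) \<Rightarrow> ('i \<Rightarrow>\<^sub>0 'r)" where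
  "smul c t = Poly_Mapping.map (\<lambda>z. c * z) t"

definition lin_ext :: "('i \<Rightarrow> ('j \<Rightarrow>\<^sub>0 'r::comm_ring_1)) \<Rightarrow> ('i \<Rightarrow>\<^sub>0 'r) \<Rightarrow> ('j \<Rightarrow>\<^sub>0 'r)" where
  "lin_ext f t = (\<Sum>i\<in>Poly_Mapping.keys t. smul (Poly_Mapping.lookup t i) (f i))"

definition bvec :: "'b \<Rightarrow> ('b \<Rightarrow>\<^sub>0 complex)" where
  "bvec a = Poly_Mapping.single a 1"

definition tens2 :: "('a \<Rightarrow>\<^sub>0 complex) \<Rightarrow> ('c \<Rightarrow>\<^sub>0 complex) \<Rightarrow> ('a \<times> 'c \<Rightarrow>\<^sub>0 complex)" where
  "tens2 u v = Poly_Mapping.Abs_poly_mapping (\<lambda>(a, b). Poly_Mapping.lookup u a * Poly_Mapping.lookup v b)"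

(* Vertex operators: Y u v k is the coefficient of x^k in Y(u,x)v, i.e. Y u v k = u_{-k-1} v. *)
type_synonym 'b vop = "('b \<Rightarrow>\<^sub>0 complex) \<Rightarrow> ('b \<Rightarrow>\<^sub>0 complex) \<Rightarrow> int \<Rightarrow> ('b \<Rightarrow>\<^sub>0 complex)"

(* Coefficient of x0^a x2^b in Y(u,x0+x2)Y(v,x2)w, (x0+x2)^n expanded in nonnegative powers of x2. *)
definition va_assoc_lhs :: "'b vop \<Rightarrow> ('b \<Rightarrow>\<^sub>0 complex) \<Rightarrow> ('b \<Rightarrow>\<^sub>0 complex) \<Rightarrow> ('b \<Rightarrow>\<^sub>0 complex)
    \<Rightarrow> int \<Rightarrow> int \<Rightarrow> ('b \<Rightarrow>\<^sub>0 complex)" where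
  "va_assoc_lhs Y u v w a b =
     (\<Sum>j\<in>{j::nat. Y v w (b - int j) \<noteq> 0}.
        smul ((of_int (a + int j) :: complex) gchoose j) (Y u (Y v w (b - int j)) (a + int j)))"

(* Coefficient of x0^a x2^b in Y(Y(u,x0)v,x2)w. *)
definition va_assoc_rhs :: "'b vop \<Rightarrow> ('b \<Rightarrow>\<^sub>0 complex) \<Rightarrow> ('b \<Rightarrow>\<^sub>0 complex) \<Rightarrow> ('b \<Rightarrow>\<^sub>0 complex)
    \<Rightarrow> int \<Rightarrow> int \<Rightarrow> ('b \<Rightarrow>\<^sub>0 complex)" where
  "va_assoc_rhs Y u v w a b = Y (Y u v a) w b"

(* Multiplication of a two-variable series (coefficients F a b of x0^a x2^b) by (x0+x2)^n. *)
definition mult_binom :: "nat \<Rightarrow> (int \<Rightarrow> int \<Rightarrow> ('b \<Rightarrow>\<^sub>0 complex)) \<Rightarrow> int \<Rightarrow> int \<Rightarrow> ('b \<Rightarrow>\<^sub>0 complex)" where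
  "mult_binom n F a b = (\<Sum>i\<le>n. smul (of_nat (n choose i)) (F (a - int (n - i)) (b - int i)))"

definition nonlocal_va :: "'b vop \<Rightarrow> ('b \<Rightarrow>\<^sub>0 complex) \<Rightarrow> bool" where
  "nonlocal_va Y vac \<longleftrightarrow>
     (\<forall>u u' v k. Y (u + u') v k = Y u v k + Y u' v k) \<and>
     (\<forall>c u v k. Y (smul c u) v k = smul c (Y u v k)) \<and>
     (\<forall>u v v' k. Y u (v + v') k = Y u v k + Y u v' k) \<and>
     (\<forall>c u v k. Y u (smul c v) k = smul c (Y u v k)) \<and>
     (\<forall>u v. \<exists>N. \<forall>k<N. Y u v k = 0) \<and>
     (\<forall>v k. Y vac v k = (if k = 0 then v else 0)) \<and>
     (\<forall>v k. k < 0 \<longrightarrow> Y v vac k = 0) \<and>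
     (\<forall>v. Y v vac 0 = v) \<and>
     (\<forall>u v w. \<exists>n::nat. \<forall>a b.
        mult_binom n (va_assoc_lhs Y u v w) a b = mult_binom n (va_assoc_rhs Y u v w) a b)"

(* D v = v_{-2} 1 = coefficient of x^1 in Y(v,x)1. *)
definition vD :: "'b vop \<Rightarrow> ('b \<Rightarrow>\<^sub>0 complex) \<Rightarrow> ('b \<Rightarrow>\<^sub>0 complex) \<Rightarrow> ('b \<Rightarrow>\<^sub>0 complex)" where
  "vD Y vac v = Y v vac 1"

type_synonym 'b smap = "('b \<times> 'b \<Rightarrow>\<^sub>0 complex) \<Rightarrow> ('b \<times> 'b \<Rightarrow>\<^sub>0 complex fls)"

definition emb2 :: "('b \<times> 'b \<Rightarrow>\<^sub>0 complex) \<Rightarrow> ('b \<times> 'b \<Rightarrow>\<^sub>0 complex fls)" where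
  "emb2 t = Poly_Mapping.map fls_const t"

definition smap_linear :: "'b smap \<Rightarrow> bool" where
  "smap_linear S \<longleftrightarrow> (\<forall>s t. S (s + t) = S s + S t) \<and> (\<forall>c t. S (smul c t) = smul (fls_const c) (S t))"

definition Sext :: "'b smap \<Rightarrow> ('b \<times> 'b \<Rightarrow>\<^sub>0 complex fls) \<Rightarrow> ('b \<times> 'b \<Rightarrow>\<^sub>0 complex fls)" where
  "Sext S t = lin_ext (\<lambda>p. S (Poly_Mapping.single p 1)) t"

definition negvar :: "complex fls \<Rightarrow> complex fls" where
  "negvar f = Abs_fls (\<lambda>n. if even n then fls_nth f n else - (fls_nth f n))"

definition flip2 :: "('b \<times> 'b \<Rightarrow>\<^sub>0 'r::zero) \<Rightarrow> ('b \<times> 'b \<Rightarrow>\<^sub>0 'r)" where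
  "flip2 t = Poly_Mapping.Abs_poly_mapping (\<lambda>(a, b). Poly_Mapping.lookup t (b, a))"

(* S^{-1}(x) = S^{21}(-x) = \<sigma> S(-x) \<sigma>. *)
definition Sinv :: "'b smap \<Rightarrow> 'b smap" where
  "Sinv S t = flip2 (Poly_Mapping.map negvar (S (flip2 t)))"

definition unitary :: "'b smap \<Rightarrow> bool" where
  "unitary S \<longleftrightarrow> (\<forall>t. Sext S (Sinv S t) = emb2 t)"

(* f(x), as a constant in z. *)
definition Ein :: "complex fls \<Rightarrow> complex fls fls" where
  "Ein f = fls_const f"

(* f(z). *)
definition Eout :: "complex fls \<Rightarrow> complex fls fls" where
  "Eout f = Abs_fls (\<lambda>n. fls_const (fls_nth f n))"

(* f(x+z), expanded in nonnegative powers of z. *)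
definition Eplus :: "complex fls \<Rightarrow> complex fls fls" where
  "Eplus f = Abs_fls (\<lambda>k. if k < 0 then 0 else
      Abs_fls (\<lambda>m. ((of_int (m + k) :: complex) gchoose (nat k)) * fls_nth f (m + k)))"

(* f(x-z), expanded in nonnegative powers of z. *)
definition Eminus :: "complex fls \<Rightarrow> complex fls fls" where
  "Eminus f = Abs_fls (\<lambda>k. if k < 0 then 0 else
      Abs_fls (\<lambda>m. (if even k then 1 else -1) *
         ((of_int (m + k) :: complex) gchoose (nat k)) * fls_nth f (m + k)))"

type_synonym 'b t3 = "('b \<times> 'b \<times> 'b \<Rightarrow>\<^sub>0 complex fls fls)"

definition emb3 :: "('b \<times> 'b \<times> 'b \<Rightarrow>\<^sub>0 complex) \<Rightarrow> 'b t3" where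
  "emb3 t = Poly_Mapping.map (\<lambda>z. fls_const (fls_const z)) t"

(* S^{12}, S^{13}, S^{23} with argument given by the embedding \<phi> (e.g. Eplus for argument x+z),
  extended linearly over C((x))((z)). *)
definition S12 :: "'b smap \<Rightarrow> (complex fls \<Rightarrow> complex fls fls) \<Rightarrow> 'b t3 \<Rightarrow> 'b t3" where
  "S12 S \<phi> = lin_ext (\<lambda>(a, b, c). Poly_Mapping.Abs_poly_mapping (\<lambda>(p, q, c').
      if c' = c then \<phi> (Poly_Mapping.lookup (S (Poly_Mapping.single (a, b) 1)) (p, q)) else 0))"

definition S13 :: "'b smap \<Rightarrow> (complex fls \<Rightarrow> complex fls fls) \<Rightarrow> 'b t3 \<Rightarrow> 'b t3" where
  "S13 S \<phi> = lin_ext (\<lambda>(a, b, c). Poly_Mapping.Abs_poly_mapping (\<lambda>(p, b', q).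
      if b' = b then \<phi> (Poly_Mapping.lookup (S (Poly_Mapping.single (a, c) 1)) (p, q)) else 0))"

definition S23 :: "'b smap \<Rightarrow> (complex fls \<Rightarrow> complex fls fls) \<Rightarrow> 'b t3 \<Rightarrow> 'b t3" where
  "S23 S \<phi> = lin_ext (\<lambda>(a, b, c). Poly_Mapping.Abs_poly_mapping (\<lambda>(a', r, s).
      if a' = a then \<phi> (Poly_Mapping.lookup (S (Poly_Mapping.single (b, c) 1)) (r, s)) else 0))"

(* Rational quantum Yang-Baxter equation S^{12}(x)S^{13}(x+z)S^{23}(z) = S^{23}(z)S^{13}(x+z)S^{12}(x). *)
definition qybe :: "'b smap \<Rightarrow> bool" where
  "qybe S \<longleftrightarrow> (\<forall>t. S12 S Ein (S13 S Eplus (S23 S Eout (emb3 t)))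
                  = S23 S Eout (S13 S Eplus (S12 S Ein (emb3 t))))"

(* F\<otimes>1 and 1\<otimes>F, extended linearly over the scalars 'r (embedding \<iota> of complex numbers). *)
definition tensL :: "(complex \<Rightarrow> 'r::comm_ring_1) \<Rightarrow> (('b \<Rightarrow>\<^sub>0 complex) \<Rightarrow> ('b \<Rightarrow>\<^sub>0 complex))
    \<Rightarrow> ('b \<times> 'b \<Rightarrow>\<^sub>0 'r) \<Rightarrow> ('b \<times> 'b \<Rightarrow>\<^sub>0 'r)" where
  "tensL \<iota> F = lin_ext (\<lambda>(a, b). Poly_Mapping.map \<iota> (tens2 (F (bvec a)) (bvec b)))"

definition tensR :: "(complex \<Rightarrow> 'r::comm_ring_1) \<Rightarrow> (('b \<Rightarrow>\<^sub>0 complex) \<Rightarrow> ('b \<Rightarrow>\<^sub>0 complex))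
    \<Rightarrow> ('b \<times> 'b \<Rightarrow>\<^sub>0 'r) \<Rightarrow> ('b \<times> 'b \<Rightarrow>\<^sub>0 'r)" where
  "tensR \<iota> F = lin_ext (\<lambda>(a, b). Poly_Mapping.map \<iota> (tens2 (bvec a) (F (bvec b))))"

definition ddx :: "('b \<times> 'b \<Rightarrow>\<^sub>0 complex fls) \<Rightarrow> ('b \<times> 'b \<Rightarrow>\<^sub>0 complex fls)" where
  "ddx t = Poly_Mapping.map fls_deriv t"

(* Coefficient of x2^n in (Y(x2)\<otimes>1)t, resp. (1\<otimes>Y(x2))t, for t in V\<otimes>V\<otimes>V. *)
definition YL :: "'b vop \<Rightarrow> ('b \<times> 'b \<times> 'b \<Rightarrow>\<^sub>0 complex) \<Rightarrow> int \<Rightarrow> ('b \<times> 'b \<Rightarrow>\<^sub>0 complex)" where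
  "YL Y t n = (\<Sum>(a, b, c)\<in>Poly_Mapping.keys t. smul (Poly_Mapping.lookup t (a, b, c)) (tens2 (Y (bvec a) (bvec b) n) (bvec c)))"

definition YR :: "'b vop \<Rightarrow> ('b \<times> 'b \<times> 'b \<Rightarrow>\<^sub>0 complex) \<Rightarrow> int \<Rightarrow> ('b \<times> 'b \<Rightarrow>\<^sub>0 complex)" where
  "YR Y t n = (\<Sum>(a, b, c)\<in>Poly_Mapping.keys t. smul (Poly_Mapping.lookup t (a, b, c)) (tens2 (bvec a) (Y (bvec b) (bvec c) n)))"

(* Coefficient of x1^m x2^n in S(x1)(Y(x2)\<otimes>1)t, resp. S(x1)(1\<otimes>Y(x2))t. *)
definition S_YL :: "'b smap \<Rightarrow> 'b vop \<Rightarrow> ('b \<times> 'b \<times> 'b \<Rightarrow>\<^sub>0 complex) \<Rightarrow> int \<Rightarrow> int \<Rightarrow> ('b \<times> 'b \<Rightarrow>\<^sub>0 complex)" where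
  "S_YL S Y t m n = Poly_Mapping.map (\<lambda>f. fls_nth f m) (S (YL Y t n))"

definition S_YR :: "'b smap \<Rightarrow> 'b vop \<Rightarrow> ('b \<times> 'b \<times> 'b \<Rightarrow>\<^sub>0 complex) \<Rightarrow> int \<Rightarrow> int \<Rightarrow> ('b \<times> 'b \<Rightarrow>\<^sub>0 complex)" where
  "S_YR S Y t m n = Poly_Mapping.map (\<lambda>f. fls_nth f m) (S (YR Y t n))"

(* Coefficient of x1^m x2^n in (Y(x2)\<otimes>1)H, resp. (1\<otimes>Y(x2))H, for H in V\<otimes>V\<otimes>V\<otimes>C((x1))((x2)),
  extended linearly over the scalar series (x1 inner, x2 outer variable). *)
definition YL_app :: "'b vop \<Rightarrow> 'b t3 \<Rightarrow> int \<Rightarrow> int \<Rightarrow> ('b \<times> 'b \<Rightarrow>\<^sub>0 complex)" where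
  "YL_app Y H m n = (\<Sum>(p, r, s)\<in>Poly_Mapping.keys H.
      \<Sum>k\<in>{k. fls_nth (Poly_Mapping.lookup H (p, r, s)) k \<noteq> 0 \<and> Y (bvec p) (bvec r) (n - k) \<noteq> 0}.
        smul (fls_nth (fls_nth (Poly_Mapping.lookup H (p, r, s)) k) m) (tens2 (Y (bvec p) (bvec r) (n - k)) (bvec s)))"

definition YR_app :: "'b vop \<Rightarrow> 'b t3 \<Rightarrow> int \<Rightarrow> int \<Rightarrow> ('b \<times> 'b \<Rightarrow>\<^sub>0 complex)" where
  "YR_app Y H m n = (\<Sum>(p, r, s)\<in>Poly_Mapping.keys H.
      \<Sum>k\<in>{k. fls_nth (Poly_Mapping.lookup H (p, r, s)) k \<noteq> 0 \<and> Y (bvec r) (bvec s) (n - k) \<noteq> 0}.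
        smul (fls_nth (fls_nth (Poly_Mapping.lookup H (p, r, s)) k) m) (tens2 (bvec p) (Y (bvec r) (bvec s) (n - k))))"

end

theory Submission
  imports Defs
begin

text \<open>Unitarity gives \<open>S\<^sup>-\<^sup>1(x) = \<sigma>S(-x)\<sigma>\<close>, so conjugating by the flip \<open>\<sigma>\<close> combined with
  \<open>x \<mapsto> -x\<close> exchanges \<open>S\<close> and \<open>S\<^sup>-\<^sup>1\<close> together with the two tensor factors. For (a) and (b)
  this conjugation carries one condition onto the other; in (b) the sign changes because
  \<open>d/dx\<close> anticommutes with \<open>x \<mapsto> -x\<close>.

  For (c), both sides of each identity are \<open>\<complex>((x\<^sub>1))((x\<^sub>2))\<close>-linear in the tensor they act on,
  so they may be compared on arbitrary tensors with series coefficients. Inverting the operators in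
  \<open>S(x\<^sub>1)(Y(x\<^sub>2)\<otimes>1) = (Y(x\<^sub>2)\<otimes>1)S\<^sup>2\<^sup>3(x\<^sub>1)S\<^sup>1\<^sup>3(x\<^sub>1+x\<^sub>2)\<close> gives the same kind of identity for
  \<open>S\<^sup>-\<^sup>1\<close>, with \<open>(S\<^sup>-\<^sup>1)\<^sup>1\<^sup>3(x\<^sub>1+x\<^sub>2)(S\<^sup>-\<^sup>1)\<^sup>2\<^sup>3(x\<^sub>1)\<close> on the right. Relabelling the three
  factors cyclically, flipping and negating \<open>x\<^sub>1\<close> turns \<open>Y(x\<^sub>2)\<otimes>1\<close> into \<open>1\<otimes>Y(x\<^sub>2)\<close>, \<open>S\<^sup>-\<^sup>1\<close>
  back into \<open>S\<close>, and that product into \<open>S\<^sup>1\<^sup>2(x\<^sub>1-x\<^sub>2)S\<^sup>1\<^sup>3(x\<^sub>1)\<close>.\<close>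

unbundle fps_syntax

section \<open>Linear algebra in coordinates\<close>

lemma lookup_map: "f 0 = 0 \<Longrightarrow> Poly_Mapping.lookup (Poly_Mapping.map f p) k = f (Poly_Mapping.lookup p k)"
  by transfer (auto simp: when_def)

lemma keys_map_subset: "Poly_Mapping.keys (Poly_Mapping.map f p) \<subseteq> Poly_Mapping.keys p"
  by transfer (auto simp: when_def)

lemma poly_mapping_map_map: "f 0 = 0 \<Longrightarrow> g 0 = 0 \<Longrightarrow> Poly_Mapping.map f (Poly_Mapping.map g x) = Poly_Mapping.map (f \<circ> g) x"
  by (rule poly_mapping_eqI) (simp add: lookup_map)

lemma poly_mapping_map_ident [simp]: "Poly_Mapping.map (\<lambda>x. x) t = t"
  by (rule poly_mapping_eqI) (simp add: lookup_map)

lemma additive_sum: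
  fixes \<Phi> :: "'a::comm_monoid_add \<Rightarrow> 'c::ab_group_add"
  assumes "\<And>a b. \<Phi> (a + b) = \<Phi> a + \<Phi> b"
  shows "\<Phi> (sum f A) = (\<Sum>x\<in>A. \<Phi> (f x))"
proof -
  have "\<Phi> 0 = 0" using assms[of 0 0] by simp
  then show ?thesis by (induction A rule: infinite_finite_induct) (simp_all add: assms)
qed

lemma lookup_smul [simp]: "Poly_Mapping.lookup (smul c t) i = c * Poly_Mapping.lookup t i"
  unfolding smul_def by (simp add: lookup_map)

lemma smul_add: "smul c (a + b) = smul c a + smul c b"
  by (rule poly_mapping_eqI) (simp add: lookup_add algebra_simps)

lemma add_smul: "smul (c + d) a = smul c a + smul d a"
  by (rule poly_mapping_eqI) (simp add: lookup_add algebra_simps)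

lemma smul_smul: "smul c (smul d a) = smul (c * d) a"
  by (rule poly_mapping_eqI) (simp add: algebra_simps)

lemma smul_one [simp]: "smul 1 a = a"
  by (rule poly_mapping_eqI) simp

lemma smul_zero [simp]: "smul c 0 = 0"
  by (rule poly_mapping_eqI) simp

lemma zero_smul [simp]: "smul 0 a = 0"
  by (rule poly_mapping_eqI) simp

lemma smul_sum: "smul c (sum f A) = (\<Sum>x\<in>A. smul c (f x))"
  by (rule poly_mapping_eqI) (simp add: lookup_sum sum_distrib_left)

lemma sum_smul: "smul (sum f A) a = (\<Sum>x\<in>A. smul (f x) a)"
  by (rule poly_mapping_eqI) (simp add: lookup_sum sum_distrib_right)

lemma smul_single: "smul c (Poly_Mapping.single i d) = Poly_Mapping.single i (c * d)"
  by (rule poly_mapping_eqI) (simp add: lookup_single when_def)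

lemma keys_smul_subset: "Poly_Mapping.keys (smul c t) \<subseteq> Poly_Mapping.keys t"
  unfolding smul_def by (rule keys_map_subset)

lemma poly_mapping_expand:
  "t = (\<Sum>i\<in>Poly_Mapping.keys t. smul (Poly_Mapping.lookup t i) (Poly_Mapping.single i 1))"
proof -
  have "t = (\<Sum>i\<in>Poly_Mapping.keys t. Poly_Mapping.single i (Poly_Mapping.lookup t i))"
    by (rule poly_mapping_eqI) (simp add: lookup_sum lookup_single when_def in_keys_iff)
  then show ?thesis by (simp add: smul_single)
qed

lemma lin_ext_superset:
  assumes "finite A" "Poly_Mapping.keys t \<subseteq> A"
  shows "lin_ext f t = (\<Sum>i\<in>A. smul (Poly_Mapping.lookup t i) (f i))"
  unfolding lin_ext_def
  by (rule sum.mono_neutral_left) (use assms in \<open>auto simp: in_keys_iff\<close>)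

lemma lookup_lin_ext:
  "Poly_Mapping.lookup (lin_ext f t) j = (\<Sum>i\<in>Poly_Mapping.keys t. Poly_Mapping.lookup t i * Poly_Mapping.lookup (f i) j)"
  unfolding lin_ext_def by (simp add: lookup_sum)

lemma lookup_lin_ext_superset:
  assumes "finite A" "Poly_Mapping.keys t \<subseteq> A"
  shows "Poly_Mapping.lookup (lin_ext f t) j = (\<Sum>i\<in>A. Poly_Mapping.lookup t i * Poly_Mapping.lookup (f i) j)"
  by (simp add: lin_ext_superset[OF assms] lookup_sum)

lemma lin_ext_add: "lin_ext f (a + b) = lin_ext f a + lin_ext f b"
proof -
  let ?A = "Poly_Mapping.keys a \<union> Poly_Mapping.keys b"
  show ?thesis
    by (simp add: lin_ext_superset[OF _ keys_add] lin_ext_superset[of ?A a] lin_ext_superset[of ?A b]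
        lookup_add add_smul sum.distrib)
qed

lemma lin_ext_smul: "lin_ext f (smul c a) = smul c (lin_ext f a)"
proof -
  have "lin_ext f (smul c a) = (\<Sum>i\<in>Poly_Mapping.keys a. smul (Poly_Mapping.lookup (smul c a) i) (f i))"
    by (rule lin_ext_superset[OF _ keys_smul_subset]) simp
  then show ?thesis by (simp add: lin_ext_def smul_sum smul_smul)
qed

lemma lin_ext_single: "lin_ext f (Poly_Mapping.single i c) = smul c (f i)"
  by (cases "c = 0") (simp_all add: lin_ext_def)

lemma lin_ext_sum: "lin_ext f (sum g A) = (\<Sum>x\<in>A. lin_ext f (g x))"
  by (rule additive_sum) (rule lin_ext_add)

lemma lin_ext_basis: "lin_ext (\<lambda>i. Poly_Mapping.single i 1) t = t"
  by (simp add: lin_ext_def poly_mapping_expand[symmetric])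

lemma lin_ext_unique:
  assumes "\<And>a b. F (a + b) = F a + F b" and "\<And>c a. F (smul c a) = smul c (F a)"
  shows "F t = lin_ext (\<lambda>i. F (Poly_Mapping.single i 1)) t"
proof -
  have "F t = F (\<Sum>i\<in>Poly_Mapping.keys t. smul (Poly_Mapping.lookup t i) (Poly_Mapping.single i 1))"
    by (subst poly_mapping_expand) simp
  also have "\<dots> = lin_ext (\<lambda>i. F (Poly_Mapping.single i 1)) t"
    by (simp add: additive_sum[of F, OF assms(1)] assms(2) lin_ext_def)
  finally show ?thesis .
qed

lemma lin_ext_compose: "lin_ext f (lin_ext g t) = lin_ext (\<lambda>i. lin_ext f (g i)) t"
  by (simp only: lin_ext_def[of g t] lin_ext_sum lin_ext_smul) (simp only: lin_ext_def[of _ t])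

section \<open>Flip, sign change and unitarity\<close>

lemma lookup_tens2 [simp]:
  "Poly_Mapping.lookup (tens2 u v) (a, b) = Poly_Mapping.lookup u a * Poly_Mapping.lookup v b"
proof -
  have "finite {x. (case x of (a, b) \<Rightarrow> Poly_Mapping.lookup u a * Poly_Mapping.lookup v b) \<noteq> 0}"
    by (rule finite_subset[of _ "Poly_Mapping.keys u \<times> Poly_Mapping.keys v"]) (auto simp: in_keys_iff)
  then show ?thesis by (simp add: tens2_def)
qed

lemma lookup_flip2: "Poly_Mapping.lookup (flip2 t) p = Poly_Mapping.lookup t (prod.swap p)"
proof -
  have "{x. (case x of (a, b) \<Rightarrow> Poly_Mapping.lookup t (b, a)) \<noteq> 0} = prod.swap ` Poly_Mapping.keys t"
    by (force simp: in_keys_iff image_iff)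
  then show ?thesis by (cases p) (simp add: flip2_def)
qed

lemma keys_flip2: "Poly_Mapping.keys (flip2 t) = prod.swap ` Poly_Mapping.keys t"
  by (force simp: in_keys_iff image_iff lookup_flip2)

lemma flip2_flip2 [simp]: "flip2 (flip2 t) = t"
  by (rule poly_mapping_eqI) (simp add: lookup_flip2)

lemma flip2_add: "flip2 (a + b) = flip2 a + flip2 b"
  by (rule poly_mapping_eqI) (simp add: lookup_flip2 lookup_add)

lemma flip2_smul: "flip2 (smul c a) = smul c (flip2 a)"
  by (rule poly_mapping_eqI) (simp add: lookup_flip2)

lemma flip2_sum: "flip2 (sum (f :: _ \<Rightarrow> ('b \<times> 'b \<Rightarrow>\<^sub>0 complex fls)) A) = (\<Sum>x\<in>A. flip2 (f x))"
  by (rule additive_sum) (rule flip2_add)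

lemma flip2_single: "flip2 (Poly_Mapping.single p c) = Poly_Mapping.single (prod.swap p) c"
  by (rule poly_mapping_eqI) (cases p, auto simp add: lookup_flip2 lookup_single when_def)

lemma flip2_tens2: "flip2 (tens2 u v) = tens2 v u"
  by (rule poly_mapping_eqI) (auto simp add: lookup_flip2)

lemma flip2_map: "f 0 = 0 \<Longrightarrow> flip2 (Poly_Mapping.map f t) = Poly_Mapping.map f (flip2 t)"
  by (rule poly_mapping_eqI) (auto simp add: lookup_flip2 lookup_map)

lemma flip2_lin_ext: "flip2 (lin_ext g w) = lin_ext (\<lambda>p. flip2 (g (prod.swap p))) (flip2 w)"
proof (rule poly_mapping_eqI)
  fix q
  have "Poly_Mapping.lookup (lin_ext (\<lambda>p. flip2 (g (prod.swap p))) (flip2 w)) q =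
        (\<Sum>i\<in>prod.swap ` Poly_Mapping.keys w.
           Poly_Mapping.lookup w (prod.swap i) * Poly_Mapping.lookup (g (prod.swap i)) (prod.swap q))"
    by (simp add: lookup_lin_ext keys_flip2 lookup_flip2)
  also have "\<dots> = (\<Sum>i\<in>Poly_Mapping.keys w. Poly_Mapping.lookup w i * Poly_Mapping.lookup (g i) (prod.swap q))"
    by (subst sum.reindex) (auto intro: inj_onI)
  finally show "Poly_Mapping.lookup (flip2 (lin_ext g w)) q
      = Poly_Mapping.lookup (lin_ext (\<lambda>p. flip2 (g (prod.swap p))) (flip2 w)) q"
    by (simp add: lookup_lin_ext lookup_flip2)
qed

lemma negvar_nth: "negvar f $$ n = (if even n then f $$ n else - (f $$ n))"
  unfolding negvar_def by (rule nth_Abs_fls_lower_bound[of "fls_subdegree f"]) simp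

lemma negvar_negvar [simp]: "negvar (negvar f) = f"
  by (rule fls_eqI) (simp add: negvar_nth)

lemma negvar_0 [simp]: "negvar 0 = 0"
  by (rule fls_eqI) (simp add: negvar_nth)

lemma negvar_eq_0_iff [simp]: "negvar f = 0 \<longleftrightarrow> f = 0"
  by (metis negvar_0 negvar_negvar)

lemma negvar_add: "negvar (f + g) = negvar f + negvar g"
  by (rule fls_eqI) (simp add: negvar_nth)

lemma negvar_uminus: "negvar (- f) = - negvar f"
  by (rule fls_eqI) (simp add: negvar_nth)

lemma negvar_diff: "negvar (f - g) = negvar f - negvar g"
  by (rule fls_eqI) (simp add: negvar_nth)

lemma negvar_sum: "negvar (sum f A) = (\<Sum>x\<in>A. negvar (f x))"
  by (rule additive_sum) (rule negvar_add)

lemma negvar_const [simp]: "negvar (fls_const c) = fls_const c"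
  by (rule fls_eqI) (simp add: negvar_nth)

lemma negvar_1 [simp]: "negvar 1 = 1"
  using negvar_const[of 1] by simp

lemma subdegree_negvar: "fls_subdegree (negvar f) = fls_subdegree f"
proof (cases "f = 0")
  case False
  show ?thesis
    by (rule fls_subdegree_eqI) (use False in \<open>simp_all add: negvar_nth\<close>)
qed simp

lemma negvar_mult: "negvar (f * g) = negvar f * negvar (g :: complex fls)"
proof (rule fls_eqI)
  fix n
  have "(negvar f * negvar g) $$ n
      = (\<Sum>i=fls_subdegree f..n - fls_subdegree g. negvar f $$ i * negvar g $$ (n - i))"
    using fls_times_nth(2)[of "negvar f" "negvar g" n] by (simp add: subdegree_negvar)
  also have "\<dots> = (\<Sum>i=fls_subdegree f..n - fls_subdegree g. (if even n then 1 else -1) * (f $$ i * g $$ (n - i)))"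
  proof (rule sum.cong)
    fix i
    show "negvar f $$ i * negvar g $$ (n - i) = (if even n then 1 else -1) * (f $$ i * g $$ (n - i))"
      unfolding negvar_nth by (cases "even i"; cases "even (n - i)"; cases "even n") auto
  qed simp
  also have "\<dots> = (if even n then 1 else -1) * (f * g) $$ n"
    by (simp add: fls_times_nth(2) sum_distrib_left)
  finally show "negvar (f * g) $$ n = (negvar f * negvar g) $$ n"
    by (simp add: negvar_nth)
qed

lemma fls_deriv_negvar: "fls_deriv (negvar f) = - negvar (fls_deriv f)"
  by (rule fls_eqI) (simp add: negvar_nth)

text \<open>The involution \<open>w(x) \<mapsto> \<sigma> w(-x)\<close> of \<open>V\<otimes>V\<otimes>\<complex>((x))\<close>, in terms of which \<open>S\<^sup>-\<^sup>1(x) = \<sigma> S(-x) \<sigma>\<close>.\<close>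

definition flip_neg :: "('b \<times> 'b \<Rightarrow>\<^sub>0 complex fls) \<Rightarrow> ('b \<times> 'b \<Rightarrow>\<^sub>0 complex fls)" where
  "flip_neg w = flip2 (Poly_Mapping.map negvar w)"

lemma lookup_flip_neg: "Poly_Mapping.lookup (flip_neg w) p = negvar (Poly_Mapping.lookup w (prod.swap p))"
  by (simp add: flip_neg_def lookup_flip2 lookup_map)

lemma flip_neg_flip_neg [simp]: "flip_neg (flip_neg w) = w"
  by (rule poly_mapping_eqI) (simp add: lookup_flip_neg)

lemma flip_neg_uminus: "flip_neg (- a) = - flip_neg a"
  by (rule poly_mapping_eqI) (simp add: lookup_flip_neg negvar_uminus)

lemma flip_neg_diff: "flip_neg (a - b) = flip_neg a - flip_neg b"
  by (rule poly_mapping_eqI) (simp add: lookup_flip_neg lookup_minus negvar_diff)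

lemma keys_flip_neg: "Poly_Mapping.keys (flip_neg w) = prod.swap ` Poly_Mapping.keys w"
  by (force simp: in_keys_iff image_iff lookup_flip_neg)

lemma keys_map_negvar: "Poly_Mapping.keys (Poly_Mapping.map negvar w) = Poly_Mapping.keys w"
  by (auto simp: in_keys_iff lookup_map)

lemma flip_neg_lin_ext: "flip_neg (lin_ext g w) = lin_ext (\<lambda>p. flip_neg (g (prod.swap p))) (flip_neg w)"
proof -
  have "Poly_Mapping.map negvar (lin_ext g w)
      = lin_ext (\<lambda>p. Poly_Mapping.map negvar (g p)) (Poly_Mapping.map negvar w)"
    by (rule poly_mapping_eqI) (simp add: lookup_lin_ext lookup_map keys_map_negvar negvar_sum negvar_mult)
  then show ?thesis by (simp add: flip_neg_def flip2_lin_ext)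
qed

lemma flip_neg_emb2: "flip_neg (emb2 x) = emb2 (flip2 x)"
  by (rule poly_mapping_eqI) (simp add: lookup_flip_neg emb2_def lookup_map lookup_flip2)

lemma flip_neg_ddx: "flip_neg (ddx w) = - ddx (flip_neg w)"
  by (rule poly_mapping_eqI) (simp add: lookup_flip_neg ddx_def lookup_map fls_deriv_negvar)

lemma Sinv_eq_flip_neg: "Sinv S t = flip_neg (S (flip2 t))"
  by (simp add: Sinv_def flip_neg_def)

lemma Sinv_Sinv [simp]: "Sinv (Sinv S) = S"
  by (rule ext) (simp add: Sinv_def poly_mapping_map_map comp_def flip2_map)

lemma lookup_emb2: "Poly_Mapping.lookup (emb2 t) p = fls_const (Poly_Mapping.lookup t p)"
  by (simp add: emb2_def lookup_map)

lemma keys_emb2: "Poly_Mapping.keys (emb2 t) = Poly_Mapping.keys t"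
  by (auto simp: in_keys_iff lookup_emb2)

lemma emb2_single: "emb2 (Poly_Mapping.single p c) = Poly_Mapping.single p (fls_const c)"
  by (simp add: emb2_def)

lemma Sext_emb2:
  assumes "smap_linear S"
  shows "Sext S (emb2 u) = S u"
proof -
  have add: "S (a + b) = S a + S b" and hom: "S (smul c a) = smul (fls_const c) (S a)" for a b c
    using assms by (auto simp: smap_linear_def)
  have "S u = S (\<Sum>i\<in>Poly_Mapping.keys u. smul (Poly_Mapping.lookup u i) (Poly_Mapping.single i 1))"
    by (subst poly_mapping_expand) simp
  also have "\<dots> = Sext S (emb2 u)"
    by (simp add: additive_sum[of S, OF add] hom Sext_def lin_ext_def keys_emb2 lookup_emb2)
  finally show ?thesis by simp
qed

lemma Sext_add: "Sext S (a + b) = Sext S a + Sext S b"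
  by (simp add: Sext_def lin_ext_add)

lemma Sext_smul: "Sext S (smul c a) = smul c (Sext S a)"
  by (simp add: Sext_def lin_ext_smul)

lemma lookup_Sext:
  "Poly_Mapping.lookup (Sext K w) p
     = (\<Sum>x\<in>Poly_Mapping.keys w. Poly_Mapping.lookup w x * Poly_Mapping.lookup (K (Poly_Mapping.single x 1)) p)"
  by (simp add: Sext_def lookup_lin_ext)

lemma Sext_Sinv_eq_flip_neg: "Sext (Sinv S) u = flip_neg (Sext S (flip_neg u))"
proof -
  have "flip_neg (Sext S (flip_neg u))
      = lin_ext (\<lambda>p. flip_neg (S (Poly_Mapping.single (prod.swap p) 1))) (flip_neg (flip_neg u))"
    by (simp add: Sext_def flip_neg_lin_ext)
  also have "\<dots> = Sext (Sinv S) u"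
    by (simp add: Sext_def Sinv_eq_flip_neg flip2_single)
  finally show ?thesis by simp
qed

lemma Sext_Sext_Sinv:
  assumes "unitary S"
  shows "Sext S (Sext (Sinv S) u) = u"
proof -
  have "Sext S (Sext (Sinv S) u) = lin_ext (\<lambda>p. Sext S (Sinv S (Poly_Mapping.single p 1))) u"
    by (simp add: Sext_def lin_ext_compose)
  also have "\<dots> = lin_ext (\<lambda>p. Poly_Mapping.single p 1) u"
    using assms by (simp add: unitary_def emb2_single)
  finally show ?thesis by (simp add: lin_ext_basis)
qed

lemma Sext_Sinv_Sext:
  assumes "unitary S"
  shows "Sext (Sinv S) (Sext S u) = u"
proof -
  have flip: "flip_neg (Sext S u) = Sext (Sinv S) (flip_neg u)"
    using Sext_Sinv_eq_flip_neg[of "Sinv S" u] by simp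
  have "Sext (Sinv S) (Sext S u) = flip_neg (Sext S (flip_neg (Sext S u)))"
    by (rule Sext_Sinv_eq_flip_neg)
  also have "\<dots> = u"
    by (simp only: flip Sext_Sext_Sinv[OF assms] flip_neg_flip_neg)
  finally show ?thesis .
qed

lemma Sext_Sinv_single:
  assumes "unitary S"
  shows "Sext (Sinv S) (S (Poly_Mapping.single p 1)) = emb2 (Poly_Mapping.single p 1)"
  using Sext_Sinv_Sext[OF assms, of "emb2 (Poly_Mapping.single p 1)"]
  by (simp add: Sext_def emb2_single lin_ext_single)

text \<open>Unitarity makes \<open>S\<close> fix \<open>\<sigma>u\<close> whenever it fixes \<open>u\<close>, since \<open>S\<^sup>-\<^sup>1 = \<sigma> S(-x) \<sigma>\<close> then fixes \<open>\<sigma>u\<close>.\<close>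

lemma unitary_fixes_flip2:
  assumes "smap_linear S" "unitary S" "S u = emb2 u"
  shows "S (flip2 u) = emb2 (flip2 u)"
proof -
  have "Sinv S (flip2 u) = emb2 (flip2 u)"
    by (simp add: Sinv_eq_flip_neg assms(3) flip_neg_emb2)
  then have "Sext S (emb2 (flip2 u)) = emb2 (flip2 u)"
    using assms(2) by (metis unitary_def)
  then show ?thesis by (simp add: Sext_emb2[OF assms(1)])
qed

lemma vacuum_left_iff_right:
  assumes "smap_linear S" "unitary S"
  shows "(\<forall>v. S (tens2 vac v) = emb2 (tens2 vac v)) \<longleftrightarrow> (\<forall>v. S (tens2 v vac) = emb2 (tens2 v vac))"
  using unitary_fixes_flip2[OF assms] by (metis flip2_tens2)

lemma flip_neg_map_const: "flip_neg (Poly_Mapping.map fls_const x) = Poly_Mapping.map fls_const (flip2 x)"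
  by (rule poly_mapping_eqI) (simp add: lookup_flip_neg lookup_map lookup_flip2)

lemma flip_neg_tensL: "flip_neg (tensL fls_const F w) = tensR fls_const F (flip_neg w)"
proof -
  have "flip_neg (tensL fls_const F w) = lin_ext (\<lambda>p. flip_neg ((\<lambda>(a, b).
      Poly_Mapping.map fls_const (tens2 (F (bvec a)) (bvec b))) (prod.swap p))) (flip_neg w)"
    unfolding tensL_def by (rule flip_neg_lin_ext)
  also have "(\<lambda>p. flip_neg ((\<lambda>(a, b). Poly_Mapping.map fls_const (tens2 (F (bvec a)) (bvec b))) (prod.swap p)))
      = (\<lambda>(a, b). Poly_Mapping.map fls_const (tens2 (bvec a) (F (bvec b))))"
    by (auto simp: flip_neg_map_const flip2_tens2)
  finally show ?thesis by (simp add: tensR_def)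
qed

lemma flip2_tensL: "flip2 (tensL (\<lambda>c. c) F t) = tensR (\<lambda>c. c) F (flip2 t)"
  unfolding tensL_def tensR_def flip2_lin_ext by (simp add: flip2_tens2 case_prod_unfold)

lemma flip2_tensR: "flip2 (tensR (\<lambda>c. c) F t) = tensL (\<lambda>c. c) F (flip2 t)"
  by (metis flip2_tensL flip2_flip2)

lemma commutator_flip_neg:
  "flip_neg (tensL fls_const F (S (flip2 t)) - S (tensL (\<lambda>c. c) F (flip2 t)))
     = tensR fls_const F (Sinv S t) - Sinv S (tensR (\<lambda>c. c) F t)"
  by (simp add: flip_neg_diff flip_neg_tensL Sinv_eq_flip_neg flip2_tensR)

lemma commutator_deriv_iff_inverse:
  "(\<forall>t. tensL fls_const F (S t) - S (tensL (\<lambda>c. c) F t) = - ddx (S t))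
   \<longleftrightarrow> (\<forall>t. tensR fls_const F (Sinv S t) - Sinv S (tensR (\<lambda>c. c) F t) = ddx (Sinv S t))"
proof (intro iffI allI)
  fix t
  assume "\<forall>t. tensL fls_const F (S t) - S (tensL (\<lambda>c. c) F t) = - ddx (S t)"
  then have "flip_neg (tensL fls_const F (S (flip2 t)) - S (tensL (\<lambda>c. c) F (flip2 t)))
      = flip_neg (- ddx (S (flip2 t)))"
    by simp
  then show "tensR fls_const F (Sinv S t) - Sinv S (tensR (\<lambda>c. c) F t) = ddx (Sinv S t)"
    by (simp add: commutator_flip_neg flip_neg_uminus flip_neg_ddx Sinv_eq_flip_neg)
next
  fix t
  assume "\<forall>t. tensR fls_const F (Sinv S t) - Sinv S (tensR (\<lambda>c. c) F t) = ddx (Sinv S t)"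
  then have "tensR fls_const F (Sinv S (flip2 t)) - Sinv S (tensR (\<lambda>c. c) F (flip2 t))
      = ddx (Sinv S (flip2 t))" ..
  then have "flip_neg (tensL fls_const F (S t) - S (tensL (\<lambda>c. c) F t)) = ddx (flip_neg (S t))"
    using commutator_flip_neg[of F S "flip2 t"] by (simp add: Sinv_eq_flip_neg)
  then have "flip_neg (flip_neg (tensL fls_const F (S t) - S (tensL (\<lambda>c. c) F t)))
      = flip_neg (ddx (flip_neg (S t)))"
    by (rule arg_cong)
  then show "tensL fls_const F (S t) - S (tensL (\<lambda>c. c) F t) = - ddx (S t)"
    by (simp add: flip_neg_ddx)
qed

section \<open>The substitutions \<open>f(x) \<mapsto> f(x \<plusminus> z)\<close>\<close>

lemma sum_eq_on_support:
  assumes "finite A" "finite B" "\<And>x. F x \<noteq> 0 \<Longrightarrow> x \<in> A \<and> x \<in> B"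
  shows "sum F A = sum F B"
proof -
  have "sum F A = sum F (A \<union> B)" by (rule sum.mono_neutral_left) (use assms in auto)
  also have "\<dots> = sum F B" by (rule sum.mono_neutral_right) (use assms in auto)
  finally show ?thesis .
qed

lemma fls_times_nth_superset:
  fixes f g :: "'a::comm_ring_1 fls"
  assumes "finite A" "\<And>i. f $$ i \<noteq> 0 \<Longrightarrow> g $$ (n - i) \<noteq> 0 \<Longrightarrow> i \<in> A"
  shows "(f * g) $$ n = (\<Sum>i\<in>A. f $$ i * g $$ (n - i))"
proof -
  have "(f * g) $$ n = (\<Sum>i=fls_subdegree f..n - fls_subdegree g. f $$ i * g $$ (n - i))"
    by (rule fls_times_nth(2))
  also have "\<dots> = (\<Sum>i\<in>A. f $$ i * g $$ (n - i))"
  proof (rule sum_eq_on_support)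
    fix i assume "f $$ i * g $$ (n - i) \<noteq> 0"
    then have "f $$ i \<noteq> 0" "g $$ (n - i) \<noteq> 0" by auto
    then show "i \<in> {fls_subdegree f..n - fls_subdegree g} \<and> i \<in> A"
      using assms(2) fls_subdegree_leI[of f i] fls_subdegree_leI[of g "n - i"] by auto
  qed (use assms in auto)
  finally show ?thesis .
qed

text \<open>The coefficient of \<open>z\<^sup>k\<close> in \<open>f(x + z)\<close> is \<open>f\<^sup>(\<^sup>k\<^sup>)(x)/k!\<close>.\<close>

definition divided_deriv :: "nat \<Rightarrow> complex fls \<Rightarrow> complex fls" where
  "divided_deriv k f = Abs_fls (\<lambda>m. (of_int (m + int k) gchoose k) * f $$ (m + int k))"

lemma divided_deriv_nth: "divided_deriv k f $$ m = (of_int (m + int k) gchoose k) * f $$ (m + int k)"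
  unfolding divided_deriv_def by (rule nth_Abs_fls_lower_bound[of "fls_subdegree f - int k"]) simp

lemma Eplus_nth: "Eplus f $$ k = (if k < 0 then 0 else divided_deriv (nat k) f)"
  unfolding Eplus_def by (subst nth_Abs_fls_lower_bound[of 0]) (auto simp: divided_deriv_def)

lemma divided_deriv_mult_nth:
  fixes m :: int and i l :: nat
  defines "n \<equiv> m + int (i + l)"
  shows "(divided_deriv i f * divided_deriv l g) $$ m =
     (\<Sum>\<alpha>\<in>{fls_subdegree f..n - fls_subdegree g}.
        ((of_int \<alpha> gchoose i) * (of_int (n - \<alpha>) gchoose l)) * (f $$ \<alpha> * g $$ (n - \<alpha>)))"
    (is "_ = (\<Sum>\<alpha>\<in>_. ?G \<alpha>)")
proof -
  define J where "J = {fls_subdegree f - int i..n - fls_subdegree g - int i}"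
  have "(divided_deriv i f * divided_deriv l g) $$ m
      = (\<Sum>j\<in>J. divided_deriv i f $$ j * divided_deriv l g $$ (m - j))"
  proof (rule fls_times_nth_superset)
    fix j assume "divided_deriv i f $$ j \<noteq> 0" "divided_deriv l g $$ (m - j) \<noteq> 0"
    then have "f $$ (j + int i) \<noteq> 0" "g $$ (m - j + int l) \<noteq> 0" by (auto simp: divided_deriv_nth)
    then show "j \<in> J"
      using fls_subdegree_leI[of f "j + int i"] fls_subdegree_leI[of g "m - j + int l"]
      unfolding J_def n_def by auto
  qed (simp add: J_def)
  also have "\<dots> = (\<Sum>j\<in>J. ?G (j + int i))"
    by (rule sum.cong) (auto simp: divided_deriv_nth n_def algebra_simps)
  also have "\<dots> = (\<Sum>\<alpha>\<in>(\<lambda>j. j + int i) ` J. ?G \<alpha>)"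
    by (subst sum.reindex) (auto simp: inj_on_def)
  finally show ?thesis by (simp add: J_def)
qed

lemma divided_deriv_mult:
  "divided_deriv k (f * g) = (\<Sum>i\<le>k. divided_deriv i f * divided_deriv (k - i) g)"
proof (rule fls_eqI)
  fix m
  define n where "n = m + int k"
  define A where "A = {fls_subdegree f..n - fls_subdegree g}"
  have "divided_deriv k (f * g) $$ m = (\<Sum>\<alpha>\<in>A. (of_int n gchoose k) * (f $$ \<alpha> * g $$ (n - \<alpha>)))"
  proof -
    have "(f * g) $$ n = (\<Sum>\<alpha>\<in>A. f $$ \<alpha> * g $$ (n - \<alpha>))"
    proof (rule fls_times_nth_superset)
      fix \<alpha> assume "f $$ \<alpha> \<noteq> 0" "g $$ (n - \<alpha>) \<noteq> 0"
      then show "\<alpha> \<in> A"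
        using fls_subdegree_leI[of f \<alpha>] fls_subdegree_leI[of g "n - \<alpha>"] unfolding A_def by auto
    qed (simp add: A_def)
    then show ?thesis by (simp add: divided_deriv_nth n_def sum_distrib_left)
  qed
  also have "\<dots> = (\<Sum>\<alpha>\<in>A. \<Sum>i\<le>k. ((of_int \<alpha> gchoose i) * (of_int (n - \<alpha>) gchoose (k - i)))
                               * (f $$ \<alpha> * g $$ (n - \<alpha>)))"
  proof (rule sum.cong)
    fix \<alpha>
    have "(of_int n :: complex) gchoose k
        = (\<Sum>i\<le>k. (of_int \<alpha> gchoose i) * (of_int (n - \<alpha>) gchoose (k - i)))"
      using gbinomial_Vandermonde[of "of_int \<alpha> :: complex" "of_int (n - \<alpha>)" k] by (simp add: atLeast0AtMost)
    then show "(of_int n gchoose k) * (f $$ \<alpha> * g $$ (n - \<alpha>)) = (\<Sum>i\<le>k. ((of_int \<alpha> gchoose i)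
        * (of_int (n - \<alpha>) gchoose (k - i))) * (f $$ \<alpha> * g $$ (n - \<alpha>)))"
      by (simp add: sum_distrib_right)
  qed simp
  also have "\<dots> = (\<Sum>i\<le>k. (divided_deriv i f * divided_deriv (k - i) g) $$ m)"
    by (subst sum.swap) (rule sum.cong, simp_all add: divided_deriv_mult_nth n_def A_def)
  finally show "divided_deriv k (f * g) $$ m = (\<Sum>i\<le>k. divided_deriv i f * divided_deriv (k - i) g) $$ m"
    by (simp add: fls_nth_sum)
qed

lemma Eplus_add: "Eplus (f + g) = Eplus f + Eplus g"
  by (rule fls_eqI, rule fls_eqI) (simp add: Eplus_nth divided_deriv_nth algebra_simps)

lemma Eplus_1: "Eplus 1 = 1"
  by (rule fls_eqI, rule fls_eqI) (auto simp: Eplus_nth divided_deriv_nth gbinomial_0_left simp del: of_int_add)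

lemma Eplus_mult: "Eplus (f * g) = Eplus f * Eplus g"
proof (rule fls_eqI)
  fix k :: int
  have "(Eplus f * Eplus g) $$ k = (\<Sum>i\<in>{0..k}. Eplus f $$ i * Eplus g $$ (k - i))"
  proof (rule fls_times_nth_superset)
    fix i assume "Eplus f $$ i \<noteq> 0" "Eplus g $$ (k - i) \<noteq> 0"
    then show "i \<in> {0..k}" by (auto simp: Eplus_nth split: if_splits)
  qed simp
  also have "\<dots> = Eplus (f * g) $$ k"
  proof (cases "k < 0")
    case False
    then have "{0..k} = int ` {..nat k}"
      by (auto simp: image_iff intro!: bexI[of _ "nat _"])
    then have "(\<Sum>i\<in>{0..k}. Eplus f $$ i * Eplus g $$ (k - i))
        = (\<Sum>i\<le>nat k. Eplus f $$ int i * Eplus g $$ (k - int i))"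
      by (simp add: sum.reindex)
    also have "\<dots> = (\<Sum>i\<le>nat k. divided_deriv i f * divided_deriv (nat k - i) g)"
      by (rule sum.cong) (use False in \<open>auto simp: Eplus_nth nat_diff_distrib\<close>)
    finally show ?thesis
      using False by (simp add: Eplus_nth divided_deriv_mult)
  qed (simp add: Eplus_nth)
  finally show "Eplus (f * g) $$ k = (Eplus f * Eplus g) $$ k" ..
qed

definition is_ring_hom :: "(complex fls \<Rightarrow> complex fls fls) \<Rightarrow> bool" where
  "is_ring_hom \<phi> \<longleftrightarrow> (\<forall>x y. \<phi> (x + y) = \<phi> x + \<phi> y) \<and> (\<forall>x y. \<phi> (x * y) = \<phi> x * \<phi> y) \<and> \<phi> 1 = 1"

lemma is_ring_hom_0: "is_ring_hom \<phi> \<Longrightarrow> \<phi> 0 = 0"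
  unfolding is_ring_hom_def by (metis add_cancel_right_right add_0)

lemma is_ring_hom_sum: "is_ring_hom \<phi> \<Longrightarrow> \<phi> (sum f A) = (\<Sum>x\<in>A. \<phi> (f x))"
  by (rule additive_sum) (simp add: is_ring_hom_def)

lemma is_ring_hom_Eplus: "is_ring_hom Eplus"
  by (simp add: is_ring_hom_def Eplus_add Eplus_mult Eplus_1)

lemma is_ring_hom_Ein: "is_ring_hom Ein"
  by (simp add: is_ring_hom_def Ein_def fls_plus_const)

definition negvar_inner :: "complex fls fls \<Rightarrow> complex fls fls" where
  "negvar_inner g = Abs_fls (\<lambda>k. negvar (g $$ k))"

lemma negvar_inner_nth [simp]: "negvar_inner g $$ k = negvar (g $$ k)"
  unfolding negvar_inner_def by (rule nth_Abs_fls_lower_bound[of "fls_subdegree g"]) simp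

lemma negvar_inner_negvar_inner [simp]: "negvar_inner (negvar_inner g) = g"
  by (rule fls_eqI) simp

lemma negvar_inner_1 [simp]: "negvar_inner 1 = 1"
  by (rule fls_eqI) simp

lemma negvar_inner_0 [simp]: "negvar_inner 0 = 0"
  by (rule fls_eqI) simp

lemma negvar_inner_eq_0_iff [simp]: "negvar_inner g = 0 \<longleftrightarrow> g = 0"
  by (metis negvar_inner_0 negvar_inner_negvar_inner)

lemma negvar_inner_add: "negvar_inner (f + g) = negvar_inner f + negvar_inner g"
  by (rule fls_eqI) (simp add: negvar_add)

lemma negvar_inner_sum: "negvar_inner (sum f A) = (\<Sum>x\<in>A. negvar_inner (f x))"
  by (rule additive_sum) (rule negvar_inner_add)

lemma negvar_inner_mult: "negvar_inner (f * g) = negvar_inner f * negvar_inner g"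
proof (rule fls_eqI)
  fix k
  have "(negvar_inner f * negvar_inner g) $$ k
      = (\<Sum>i\<in>{fls_subdegree f..k - fls_subdegree g}. negvar_inner f $$ i * negvar_inner g $$ (k - i))"
  proof (rule fls_times_nth_superset)
    fix i assume "negvar_inner f $$ i \<noteq> 0" "negvar_inner g $$ (k - i) \<noteq> 0"
    then have "f $$ i \<noteq> 0" "g $$ (k - i) \<noteq> 0" by auto
    then show "i \<in> {fls_subdegree f..k - fls_subdegree g}"
      using fls_subdegree_leI[of f i] fls_subdegree_leI[of g "k - i"] by auto
  qed simp
  also have "\<dots> = negvar ((f * g) $$ k)"
    by (simp add: fls_times_nth(2) negvar_sum negvar_mult)
  finally show "negvar_inner (f * g) $$ k = (negvar_inner f * negvar_inner g) $$ k" by simp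
qed

lemma negvar_inner_Ein: "negvar_inner (Ein (negvar f)) = Ein f"
  by (rule fls_eqI) (simp add: Ein_def)

lemma Eminus_nth_nth:
  "Eminus f $$ k $$ m = (if k < 0 then 0
     else (if even k then 1 else -1) * ((of_int (m + k) :: complex) gchoose (nat k)) * f $$ (m + k))"
proof -
  have "Eminus f $$ k = (if k < 0 then 0 else Abs_fls (\<lambda>m. (if even k then 1 else -1)
      * ((of_int (m + k) :: complex) gchoose (nat k)) * f $$ (m + k)))"
    unfolding Eminus_def by (subst nth_Abs_fls_lower_bound[of 0]) auto
  moreover have "Abs_fls (\<lambda>m. (if even k then 1 else -1) * ((of_int (m + k) :: complex) gchoose (nat k)) * f $$ (m + k)) $$ m
     = (if even k then 1 else -1) * ((of_int (m + k) :: complex) gchoose (nat k)) * f $$ (m + k)"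
    by (rule nth_Abs_fls_lower_bound[of "fls_subdegree f - k"]) simp
  ultimately show ?thesis by simp
qed

lemma negvar_inner_Eplus: "negvar_inner (Eplus (negvar f)) = Eminus f"
  by (rule fls_eqI, rule fls_eqI) (simp add: negvar_nth Eplus_nth divided_deriv_nth Eminus_nth_nth)

section \<open>The operators \<open>S\<^sup>i\<^sup>j\<close>\<close>

text \<open>\<open>S\<^sup>i\<^sup>j\<close> acts on the tensor factors picked out by a bijection \<open>e\<close> from the index triples to
  (pair of acting indices, spectator index); its coefficients are transported to \<open>\<complex>((x))((z))\<close> by \<open>\<phi>\<close>.\<close>

definition leg :: "('t \<Rightarrow> ('b \<times> 'b) \<times> 'c) \<Rightarrow> 'b smap \<Rightarrow> (complex fls \<Rightarrow> complex fls fls) \<Rightarrow> 't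
    \<Rightarrow> ('t \<Rightarrow>\<^sub>0 complex fls fls)" where
  "leg e K \<phi> i = Poly_Mapping.Abs_poly_mapping (\<lambda>j. if snd (e j) = snd (e i)
     then \<phi> (Poly_Mapping.lookup (K (Poly_Mapping.single (fst (e i)) 1)) (fst (e j))) else 0)"

definition split12 :: "'b \<times> 'b \<times> 'b \<Rightarrow> ('b \<times> 'b) \<times> 'b" where
  "split12 = (\<lambda>(a, b, c). ((a, b), c))"

definition split13 :: "'b \<times> 'b \<times> 'b \<Rightarrow> ('b \<times> 'b) \<times> 'b" where
  "split13 = (\<lambda>(a, b, c). ((a, c), b))"

definition split23 :: "'b \<times> 'b \<times> 'b \<Rightarrow> ('b \<times> 'b) \<times> 'b" where
  "split23 = (\<lambda>(a, b, c). ((b, c), a))"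

lemma split12_apply [simp]: "split12 (a, b, c) = ((a, b), c)"
  by (simp add: split12_def)

lemma split13_apply [simp]: "split13 (a, b, c) = ((a, c), b)"
  by (simp add: split13_def)

lemma split23_apply [simp]: "split23 (a, b, c) = ((b, c), a)"
  by (simp add: split23_def)

lemma inv_split13: "inv split13 (q, b) = (fst q, b, snd q)"
  by (rule inv_f_eq) (auto simp: split13_def inj_def)

lemma inv_split23: "inv split23 (q, a) = (a, fst q, snd q)"
  by (rule inv_f_eq) (auto simp: split23_def inj_def)

lemma bij_split12: "bij split12"
  by (rule bijI') (auto simp: split12_def)

lemma bij_split13: "bij split13"
  by (rule bijI') (auto simp: split13_def)

lemma bij_split23: "bij split23"
  by (rule bijI') (auto simp: split23_def)

lemma S12_eq_leg: "S12 K \<phi> = lin_ext (leg split12 K \<phi>)"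
  unfolding S12_def leg_def by (simp add: split12_def case_prod_unfold cong: if_cong)

lemma S13_eq_leg: "S13 K \<phi> = lin_ext (leg split13 K \<phi>)"
  unfolding S13_def leg_def by (simp add: split13_def case_prod_unfold cong: if_cong)

lemma S23_eq_leg: "S23 K \<phi> = lin_ext (leg split23 K \<phi>)"
  unfolding S23_def leg_def by (simp add: split23_def case_prod_unfold cong: if_cong)

lemma lookup_leg:
  assumes "\<phi> 0 = 0" "bij e"
  shows "Poly_Mapping.lookup (leg e K \<phi> i) j = (if snd (e j) = snd (e i)
     then \<phi> (Poly_Mapping.lookup (K (Poly_Mapping.single (fst (e i)) 1)) (fst (e j))) else 0)"
proof -
  let ?W = "K (Poly_Mapping.single (fst (e i)) 1)"
  let ?f = "\<lambda>j. if snd (e j) = snd (e i) then \<phi> (Poly_Mapping.lookup ?W (fst (e j))) else 0"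
  have "{j. ?f j \<noteq> 0} \<subseteq> e -` ((\<lambda>q. (q, snd (e i))) ` Poly_Mapping.keys ?W)"
  proof
    fix j assume "j \<in> {j. ?f j \<noteq> 0}"
    then have "snd (e j) = snd (e i)" "fst (e j) \<in> Poly_Mapping.keys ?W"
      using assms(1) by (auto simp: in_keys_iff split: if_splits)
    then show "j \<in> e -` ((\<lambda>q. (q, snd (e i))) ` Poly_Mapping.keys ?W)"
      by (auto simp: image_iff prod_eq_iff)
  qed
  moreover have "finite (e -` ((\<lambda>q. (q, snd (e i))) ` Poly_Mapping.keys ?W))"
    using assms(2) by (intro finite_vimageI) (auto simp: bij_is_inj)
  ultimately have "finite {j. ?f j \<noteq> 0}" by (rule finite_subset)
  then show ?thesis by (simp add: leg_def)
qed

lemma keys_leg: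
  assumes "\<phi> 0 = 0" "bij e"
  shows "Poly_Mapping.keys (leg e K \<phi> i)
    \<subseteq> (\<lambda>q. inv e (q, snd (e i))) ` Poly_Mapping.keys (K (Poly_Mapping.single (fst (e i)) 1))"
proof
  fix j assume "j \<in> Poly_Mapping.keys (leg e K \<phi> i)"
  then have "snd (e j) = snd (e i)" "fst (e j) \<in> Poly_Mapping.keys (K (Poly_Mapping.single (fst (e i)) 1))"
    using assms(1) by (auto simp: in_keys_iff lookup_leg[where \<phi> = \<phi>, OF assms] split: if_splits)
  moreover have "j = inv e (fst (e j), snd (e j))"
    using assms(2) by (simp add: bij_is_inj)
  ultimately show "j \<in> (\<lambda>q. inv e (q, snd (e i))) ` Poly_Mapping.keys (K (Poly_Mapping.single (fst (e i)) 1))"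
    by auto
qed

text \<open>The ring homomorphism \<open>\<phi>\<close> carries the relation \<open>\<Sum>\<^sub>q K'(p)\<^sub>q K(q) = \<delta>\<^sub>p\<close> between
  coefficients over to the transported ones.\<close>

lemma leg_inverse:
  fixes K K' :: "'b smap"
  assumes \<phi>: "is_ring_hom \<phi>" and e: "bij e"
    and KK': "\<And>p. Sext K (K' (Poly_Mapping.single p 1)) = emb2 (Poly_Mapping.single p 1)"
  shows "lin_ext (leg e K \<phi>) (lin_ext (leg e K' \<phi>) X) = X"
proof -
  have \<phi>0: "\<phi> 0 = 0" using \<phi> by (rule is_ring_hom_0)
  have \<phi>1: "\<phi> 1 = 1" and \<phi>mult: "\<phi> (x * y) = \<phi> x * \<phi> y" for x y
    using \<phi> by (simp_all add: is_ring_hom_def)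
  have e_inv: "e (inv e y) = y" for y
    using e by (simp add: bij_is_surj surj_f_inv_f)
  have key: "lin_ext (leg e K \<phi>) (leg e K' \<phi> i) = Poly_Mapping.single i 1" for i
  proof (rule poly_mapping_eqI)
    fix j
    let ?W = "K' (Poly_Mapping.single (fst (e i)) 1)"
    have "Poly_Mapping.lookup (lin_ext (leg e K \<phi>) (leg e K' \<phi> i)) j
        = (\<Sum>x\<in>(\<lambda>q. inv e (q, snd (e i))) ` Poly_Mapping.keys ?W.
             Poly_Mapping.lookup (leg e K' \<phi> i) x * Poly_Mapping.lookup (leg e K \<phi> x) j)"
      by (rule lookup_lin_ext_superset) (simp_all add: keys_leg[where \<phi> = \<phi>, OF \<phi>0 e])
    also have "\<dots> = (\<Sum>q\<in>Poly_Mapping.keys ?W. \<phi> (Poly_Mapping.lookup ?W q) *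
        (if snd (e j) = snd (e i) then \<phi> (Poly_Mapping.lookup (K (Poly_Mapping.single q 1)) (fst (e j))) else 0))"
    proof (subst sum.reindex)
      show "inj_on (\<lambda>q. inv e (q, snd (e i))) (Poly_Mapping.keys ?W)"
        by (rule inj_onI) (metis e_inv prod.inject)
    qed (simp add: lookup_leg[where \<phi> = \<phi>, OF \<phi>0 e] e_inv cong: if_cong)
    also have "\<dots> = (if snd (e j) = snd (e i) then \<phi> (Poly_Mapping.lookup (Sext K ?W) (fst (e j))) else 0)"
      by (simp add: lookup_Sext is_ring_hom_sum[OF \<phi>] \<phi>mult)
    also have "\<dots> = (if e j = e i then 1 else 0)"
      using KK' by (auto simp: lookup_emb2 lookup_single when_def \<phi>0 \<phi>1 prod_eq_iff)
    also have "\<dots> = Poly_Mapping.lookup (Poly_Mapping.single i 1) j"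
      using e by (auto simp: lookup_single when_def bij_is_inj inj_eq)
    finally show "Poly_Mapping.lookup (lin_ext (leg e K \<phi>) (leg e K' \<phi> i)) j
        = Poly_Mapping.lookup (Poly_Mapping.single i 1) j" .
  qed
  show ?thesis
    by (simp add: lin_ext_compose key lin_ext_basis)
qed

lemma S13_inverse:
  "is_ring_hom \<phi> \<Longrightarrow> (\<And>p. Sext K (K' (Poly_Mapping.single p 1)) = emb2 (Poly_Mapping.single p 1))
    \<Longrightarrow> S13 K \<phi> (S13 K' \<phi> X) = X"
  by (simp add: S13_eq_leg leg_inverse bij_split13)

lemma S23_inverse:
  "is_ring_hom \<phi> \<Longrightarrow> (\<And>p. Sext K (K' (Poly_Mapping.single p 1)) = emb2 (Poly_Mapping.single p 1))
    \<Longrightarrow> S23 K \<phi> (S23 K' \<phi> X) = X"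
  by (simp add: S23_eq_leg leg_inverse bij_split23)

section \<open>Series in the second variable\<close>

text \<open>A \<open>'b zseries\<close> is a series in \<open>z\<close> with coefficients in \<open>V\<otimes>V\<otimes>\<complex>((x))\<close>; unlike an element of
  \<open>V\<otimes>V\<otimes>\<complex>((x))((z))\<close> it may involve infinitely many basis tensors, as \<open>(Y(z)\<otimes>1)u\<close> does.
  Such series are a module over \<open>\<complex>((x))((z))\<close> via \<open>zmult\<close> once they vanish below some degree.\<close>

type_synonym 'b zseries = "int \<Rightarrow> ('b \<times> 'b \<Rightarrow>\<^sub>0 complex fls)"

definition zbounded :: "'b zseries \<Rightarrow> bool" where
  "zbounded F \<longleftrightarrow> (\<exists>N. \<forall>n<N. F n = 0)"

definition zmult :: "complex fls fls \<Rightarrow> 'b zseries \<Rightarrow> 'b zseries" where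
  "zmult g F n = (\<Sum>k\<in>{k. g $$ k \<noteq> 0 \<and> F (n - k) \<noteq> 0}. smul (g $$ k) (F (n - k)))"

lemma zmult_superset:
  assumes "zbounded F" "finite A" "\<And>k. g $$ k \<noteq> 0 \<Longrightarrow> F (n - k) \<noteq> 0 \<Longrightarrow> k \<in> A"
  shows "zmult g F n = (\<Sum>k\<in>A. smul (g $$ k) (F (n - k)))"
proof -
  obtain N where N: "\<And>n. n < N \<Longrightarrow> F n = 0" using assms(1) unfolding zbounded_def by blast
  have "{k. g $$ k \<noteq> 0 \<and> F (n - k) \<noteq> 0} \<subseteq> {fls_subdegree g..n - N}"
    using N fls_subdegree_leI[of g] by force
  then have "finite {k. g $$ k \<noteq> 0 \<and> F (n - k) \<noteq> 0}" by (rule finite_subset) simp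
  then show ?thesis
    unfolding zmult_def
  proof (rule sum_eq_on_support)
    fix k assume "smul (g $$ k) (F (n - k)) \<noteq> 0"
    then have "g $$ k \<noteq> 0" "F (n - k) \<noteq> 0" by auto
    then show "k \<in> {k. g $$ k \<noteq> 0 \<and> F (n - k) \<noteq> 0} \<and> k \<in> A" using assms(3) by auto
  qed (use assms in auto)
qed

lemma zmult_eq_interval:
  assumes "\<And>n. n < N \<Longrightarrow> F n = 0"
  shows "zmult g F n = (\<Sum>k\<in>{fls_subdegree g..n - N}. smul (g $$ k) (F (n - k)))"
proof (rule zmult_superset)
  show "zbounded F" using assms unfolding zbounded_def by blast
qed (use assms fls_subdegree_leI[of g] in force)+

lemma zmult_shift_superset:
  assumes "zbounded F" "finite A" "\<And>k. g $$ (k - d) \<noteq> 0 \<Longrightarrow> F (n + d - k) \<noteq> 0 \<Longrightarrow> k \<in> A"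
  shows "zmult g F n = (\<Sum>k\<in>A. smul (g $$ (k - d)) (F (n + d - k)))"
proof -
  have "zmult g F n = (\<Sum>l\<in>(\<lambda>k. k - d) ` A. smul (g $$ l) (F (n - l)))"
    by (rule zmult_superset) (use assms in \<open>auto simp: image_iff intro!: bexI[of _ "_ + d"]\<close>)
  also have "\<dots> = (\<Sum>k\<in>A. smul (g $$ (k - d)) (F (n + d - k)))"
    by (subst sum.reindex) (auto simp: inj_on_def algebra_simps)
  finally show ?thesis .
qed

lemma zbounded_zmult:
  assumes "zbounded F" shows "zbounded (zmult g F)"
proof -
  obtain N where N: "\<And>n. n < N \<Longrightarrow> F n = 0" using assms unfolding zbounded_def by blast
  have "zmult g F n = 0" if "n < N + fls_subdegree g" for n
    using that by (simp add: zmult_eq_interval[OF N])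
  then show ?thesis unfolding zbounded_def by blast
qed

lemma zbounded_add: "zbounded F \<Longrightarrow> zbounded G \<Longrightarrow> zbounded (\<lambda>n. F n + G n)"
  unfolding zbounded_def by (metis add.right_neutral min.strict_boundedE)

lemma zbounded_sum: "(\<And>i. i \<in> A \<Longrightarrow> zbounded (F i)) \<Longrightarrow> zbounded (\<lambda>n. \<Sum>i\<in>A. F i n)"
proof (induction A rule: infinite_finite_induct)
  case (insert x F)
  then show ?case by (simp add: zbounded_add)
qed (simp_all add: zbounded_def)

lemma zmult_add_left:
  assumes "zbounded F"
  shows "zmult (f + g) F n = zmult f F n + zmult g F n"
proof -
  obtain N where N: "\<And>n. n < N \<Longrightarrow> F n = 0" using assms unfolding zbounded_def by blast
  let ?A = "{min (fls_subdegree f) (fls_subdegree g)..n - N}"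
  have "zmult h F n = (\<Sum>k\<in>?A. smul (h $$ k) (F (n - k)))" if "h \<in> {f, g, f + g}" for h
  proof (rule zmult_superset[OF assms])
    fix k assume "h $$ k \<noteq> 0" "F (n - k) \<noteq> 0"
    then have "f $$ k \<noteq> 0 \<or> g $$ k \<noteq> 0" "n - k \<ge> N" using that N[of "n - k"] by force+
    then show "k \<in> ?A" using fls_subdegree_leI[of f k] fls_subdegree_leI[of g k] by auto
  qed simp
  then show ?thesis by (simp add: add_smul sum.distrib)
qed

lemma zmult_add_right:
  assumes "zbounded F" "zbounded G"
  shows "zmult g (\<lambda>n. F n + G n) n = zmult g F n + zmult g G n"
proof -
  obtain N1 where N1: "\<And>n. n < N1 \<Longrightarrow> F n = 0" using assms(1) unfolding zbounded_def by blast
  obtain N2 where N2: "\<And>n. n < N2 \<Longrightarrow> G n = 0" using assms(2) unfolding zbounded_def by blast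
  define N where "N = min N1 N2"
  have F: "F n = 0" and G: "G n = 0" if "n < N" for n
    using N1 N2 that by (simp_all add: N_def)
  then have "F n + G n = 0" if "n < N" for n using that by simp
  then show ?thesis
    by (simp add: zmult_eq_interval[of N F, OF F] zmult_eq_interval[of N G, OF G]
        zmult_eq_interval[of N "\<lambda>n. F n + G n"] smul_add sum.distrib)
qed

lemma zmult_sum_right:
  "(\<And>i. i \<in> A \<Longrightarrow> zbounded (F i)) \<Longrightarrow> zmult g (\<lambda>n. \<Sum>i\<in>A. F i n) n = (\<Sum>i\<in>A. zmult g (F i) n)"
proof (induction A rule: infinite_finite_induct)
  case (insert x A)
  then show ?case by (simp add: zmult_add_right zbounded_sum)
qed (simp_all add: zmult_def)

lemma smul_zmult_shift:
  assumes N: "\<And>n. n < N \<Longrightarrow> F n = 0" and i: "fls_subdegree f \<le> i"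
  shows "smul c (zmult g F (n - i))
    = (\<Sum>k\<in>{fls_subdegree f + fls_subdegree g..n - N}. smul (c * g $$ (k - i)) (F (n - k)))"
proof -
  have "zmult g F (n - i) = (\<Sum>k\<in>{fls_subdegree f + fls_subdegree g..n - N}. smul (g $$ (k - i)) (F (n - i + i - k)))"
  proof (rule zmult_shift_superset)
    show "zbounded F" using N unfolding zbounded_def by blast
  next
    fix k assume "g $$ (k - i) \<noteq> 0" "F (n - i + i - k) \<noteq> 0"
    then show "k \<in> {fls_subdegree f + fls_subdegree g..n - N}"
      using i N[of "n - k"] fls_subdegree_leI[of g "k - i"] by force
  qed simp
  then show ?thesis by (simp add: smul_sum smul_smul)
qed

lemma zmult_mult:
  assumes "zbounded F"
  shows "zmult (f * g) F n = zmult f (zmult g F) n"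
proof -
  obtain N where N: "\<And>n. n < N \<Longrightarrow> F n = 0" using assms unfolding zbounded_def by blast
  define A where "A = {fls_subdegree f + fls_subdegree g..n - N}"
  define I where "I = {fls_subdegree f..n - N - fls_subdegree g}"
  have "zmult f (zmult g F) n = (\<Sum>i\<in>I. smul (f $$ i) (zmult g F (n - i)))"
  proof (rule zmult_superset[OF zbounded_zmult[OF assms]])
    fix i assume "f $$ i \<noteq> 0" "zmult g F (n - i) \<noteq> 0"
    then show "i \<in> I"
      using zmult_eq_interval[OF N, where g = g and n = "n - i"] fls_subdegree_leI[of f i] unfolding I_def
      by (cases "n - i < N + fls_subdegree g") auto
  qed (simp add: I_def)
  also have "\<dots> = (\<Sum>i\<in>I. \<Sum>k\<in>A. smul (f $$ i * g $$ (k - i)) (F (n - k)))"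
    unfolding A_def by (rule sum.cong) (auto simp: I_def intro: smul_zmult_shift[OF N])
  also have "\<dots> = (\<Sum>k\<in>A. smul ((f * g) $$ k) (F (n - k)))"
  proof (subst sum.swap, rule sum.cong)
    fix k assume k: "k \<in> A"
    have "(f * g) $$ k = (\<Sum>i\<in>I. f $$ i * g $$ (k - i))"
    proof (rule fls_times_nth_superset)
      fix i assume "f $$ i \<noteq> 0" "g $$ (k - i) \<noteq> 0"
      then show "i \<in> I" using k fls_subdegree_leI[of f i] fls_subdegree_leI[of g "k - i"]
        unfolding I_def A_def by force
    qed (simp add: I_def)
    then show "(\<Sum>i\<in>I. smul (f $$ i * g $$ (k - i)) (F (n - k))) = smul ((f * g) $$ k) (F (n - k))"
      by (simp add: sum_smul)
  qed simp
  also have "\<dots> = zmult (f * g) F n"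
  proof (rule zmult_superset[OF assms, symmetric])
    fix k assume "(f * g) $$ k \<noteq> 0" "F (n - k) \<noteq> 0"
    then show "k \<in> A"
      using N[of "n - k"] fls_times_nth_eq0[of k f g] unfolding A_def by force
  qed (simp add: A_def)
  finally show ?thesis by simp
qed

definition zlin_ext :: "('i \<Rightarrow> 'b zseries) \<Rightarrow> ('i \<Rightarrow>\<^sub>0 complex fls fls) \<Rightarrow> 'b zseries" where
  "zlin_ext E H n = (\<Sum>i\<in>Poly_Mapping.keys H. zmult (Poly_Mapping.lookup H i) (E i) n)"

lemma zlin_ext_superset:
  assumes "finite A" "Poly_Mapping.keys H \<subseteq> A"
  shows "zlin_ext E H n = (\<Sum>i\<in>A. zmult (Poly_Mapping.lookup H i) (E i) n)"
  unfolding zlin_ext_def by (rule sum.mono_neutral_left) (use assms in \<open>auto simp: in_keys_iff zmult_def\<close>)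

lemma zbounded_zlin_ext: "(\<And>i. zbounded (E i)) \<Longrightarrow> zbounded (zlin_ext E H)"
  unfolding zlin_ext_def[abs_def] by (intro zbounded_sum zbounded_zmult)

lemma zlin_ext_add:
  assumes "\<And>i. zbounded (E i)"
  shows "zlin_ext E (H1 + H2) n = zlin_ext E H1 n + zlin_ext E H2 n"
proof -
  let ?A = "Poly_Mapping.keys H1 \<union> Poly_Mapping.keys H2"
  have "zlin_ext E (H1 + H2) n = (\<Sum>i\<in>?A. zmult (Poly_Mapping.lookup (H1 + H2) i) (E i) n)"
    by (rule zlin_ext_superset) (simp_all add: keys_add)
  also have "\<dots> = (\<Sum>i\<in>?A. zmult (Poly_Mapping.lookup H1 i) (E i) n + zmult (Poly_Mapping.lookup H2 i) (E i) n)"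
    by (simp add: lookup_add zmult_add_left[OF assms])
  also have "\<dots> = zlin_ext E H1 n + zlin_ext E H2 n"
    by (simp add: sum.distrib zlin_ext_superset[of ?A H1] zlin_ext_superset[of ?A H2])
  finally show ?thesis .
qed

lemma zlin_ext_smul:
  assumes "\<And>i. zbounded (E i)"
  shows "zlin_ext E (smul g H) n = zmult g (zlin_ext E H) n"
proof -
  have "zlin_ext E (smul g H) n = (\<Sum>i\<in>Poly_Mapping.keys H. zmult g (zmult (Poly_Mapping.lookup H i) (E i)) n)"
    by (simp add: zlin_ext_superset[OF _ keys_smul_subset] zmult_mult[OF assms])
  also have "\<dots> = zmult g (\<lambda>n. \<Sum>i\<in>Poly_Mapping.keys H. zmult (Poly_Mapping.lookup H i) (E i) n) n"
    by (rule zmult_sum_right[symmetric]) (simp add: zbounded_zmult assms)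
  finally show ?thesis by (simp add: zlin_ext_def[abs_def])
qed

lemma zmult_semilinear:
  fixes \<Phi> :: "('b \<times> 'b \<Rightarrow>\<^sub>0 complex fls) \<Rightarrow> ('c \<times> 'c \<Rightarrow>\<^sub>0 complex fls)"
  assumes F: "zbounded F"
    and add: "\<And>a b. \<Phi> (a + b) = \<Phi> a + \<Phi> b"
    and smul: "\<And>c a. \<Phi> (smul c a) = smul (\<psi> c) (\<Phi> a)"
    and \<psi>0: "\<psi> 0 = 0" and g': "\<And>k. g' $$ k = \<psi> (g $$ k)"
  shows "\<Phi> (zmult g F n) = zmult g' (\<lambda>m. \<Phi> (F m)) n"
proof -
  obtain N where N: "\<And>n. n < N \<Longrightarrow> F n = 0" using F unfolding zbounded_def by blast
  have \<Phi>0: "\<Phi> 0 = 0" using add[of 0 0] by simp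
  have "\<Phi> (zmult g F n) = (\<Sum>k\<in>{fls_subdegree g..n - N}. smul (g' $$ k) (\<Phi> (F (n - k))))"
    by (simp add: zmult_eq_interval[OF N] additive_sum[of \<Phi>, OF add] smul g')
  also have "\<dots> = zmult g' (\<lambda>m. \<Phi> (F m)) n"
  proof (rule sym, rule zmult_superset)
    show "zbounded (\<lambda>m. \<Phi> (F m))" using N \<Phi>0 unfolding zbounded_def by (intro exI[of _ N]) simp
  next
    fix k assume "g' $$ k \<noteq> 0" "\<Phi> (F (n - k)) \<noteq> 0"
    then have "g $$ k \<noteq> 0" "F (n - k) \<noteq> 0" using g' \<psi>0 \<Phi>0 by auto
    then show "k \<in> {fls_subdegree g..n - N}" using N[of "n - k"] fls_subdegree_leI[of g k] by force
  qed simp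
  finally show ?thesis .
qed

lemma Sext_zmult: "zbounded F \<Longrightarrow> Sext S (zmult g F n) = zmult g (\<lambda>m. Sext S (F m)) n"
  by (rule zmult_semilinear[where \<psi> = "\<lambda>c. c"]) (simp_all add: Sext_add Sext_smul)

lemma flip2_zmult: "zbounded F \<Longrightarrow> flip2 (zmult g F n) = zmult g (\<lambda>m. flip2 (F m)) n"
  by (rule zmult_semilinear[where \<psi> = "\<lambda>c. c"]) (simp_all add: flip2_add flip2_smul)

lemma map_negvar_add:
  "Poly_Mapping.map negvar (a + b) = Poly_Mapping.map negvar a + Poly_Mapping.map negvar b"
  by (rule poly_mapping_eqI) (simp add: lookup_map lookup_add negvar_add)

lemma map_negvar_zmult:
  "zbounded F \<Longrightarrow>
    Poly_Mapping.map negvar (zmult g F n) = zmult (negvar_inner g) (\<lambda>m. Poly_Mapping.map negvar (F m)) n"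
  by (rule zmult_semilinear[where \<psi> = negvar])
    (simp_all add: map_negvar_add poly_mapping_eqI lookup_map negvar_mult)

lemma zlin_ext_unique:
  fixes L R :: "('i \<Rightarrow>\<^sub>0 complex fls fls) \<Rightarrow> 'b zseries"
  assumes "\<And>a b n. L (a + b) n = L a n + L b n" "\<And>g a n. L (smul g a) n = zmult g (L a) n"
    and "\<And>a b n. R (a + b) n = R a n + R b n" "\<And>g a n. R (smul g a) n = zmult g (R a) n"
    and "\<And>i. L (Poly_Mapping.single i 1) = R (Poly_Mapping.single i 1)"
  shows "L H n = R H n"
proof -
  have expand: "Q H n = zlin_ext (\<lambda>i. Q (Poly_Mapping.single i 1)) H n"
    if add: "\<And>a b n. Q (a + b) n = Q a n + Q b n" and smul: "\<And>g a n. Q (smul g a) n = zmult g (Q a) n"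
    for Q :: "('i \<Rightarrow>\<^sub>0 complex fls fls) \<Rightarrow> 'b zseries"
  proof -
    have "Q H n = Q (\<Sum>i\<in>Poly_Mapping.keys H. smul (Poly_Mapping.lookup H i) (Poly_Mapping.single i 1)) n"
      by (subst poly_mapping_expand) simp
    also have "\<dots> = (\<Sum>i\<in>Poly_Mapping.keys H. Q (smul (Poly_Mapping.lookup H i) (Poly_Mapping.single i 1)) n)"
      by (rule additive_sum[where \<Phi> = "\<lambda>x. Q x n"]) (rule add)
    finally show ?thesis by (simp add: smul zlin_ext_def)
  qed
  show ?thesis
    using expand[of L] expand[of R] assms by simp
qed

section \<open>Vertex operators as series in \<open>z\<close>\<close>

definition YL_series :: "'b vop \<Rightarrow> 'b \<times> 'b \<times> 'b \<Rightarrow> 'b zseries" where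
  "YL_series Y = (\<lambda>(p, r, s) m. emb2 (tens2 (Y (bvec p) (bvec r) m) (bvec s)))"

definition YR_series :: "'b vop \<Rightarrow> 'b \<times> 'b \<times> 'b \<Rightarrow> 'b zseries" where
  "YR_series Y = (\<lambda>(p, r, s) m. emb2 (tens2 (bvec p) (Y (bvec r) (bvec s) m)))"

lemma tens2_zero_left [simp]: "tens2 0 v = 0"
  by (rule poly_mapping_eqI) (auto simp: tens2_def)

lemma tens2_zero_right [simp]: "tens2 u 0 = 0"
  by (rule poly_mapping_eqI) (auto simp: tens2_def)

lemma tens2_bvec_right_eq_0_iff: "tens2 u (bvec s) = 0 \<longleftrightarrow> u = 0"
proof
  assume "tens2 u (bvec s) = 0"
  then have "Poly_Mapping.lookup (tens2 u (bvec s)) (a, s) = 0" for a by simp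
  then show "u = 0" by (intro poly_mapping_eqI) (simp add: bvec_def)
qed simp

lemma tens2_bvec_left_eq_0_iff: "tens2 (bvec p) u = 0 \<longleftrightarrow> u = 0"
proof
  assume "tens2 (bvec p) u = 0"
  then have "Poly_Mapping.lookup (tens2 (bvec p) u) (p, a) = 0" for a by simp
  then show "u = 0" by (intro poly_mapping_eqI) (simp add: bvec_def)
qed simp

lemma emb2_eq_0_iff [simp]: "emb2 x = 0 \<longleftrightarrow> x = 0"
proof
  assume "emb2 x = 0"
  then have "Poly_Mapping.lookup (emb2 x) p = 0" for p by simp
  then show "x = 0" by (intro poly_mapping_eqI) (simp add: lookup_emb2)
qed (simp add: poly_mapping_eqI lookup_emb2)

lemma zbounded_YL_series:
  assumes "nonlocal_va Y vac" shows "zbounded (YL_series Y i)"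
proof -
  obtain p r s where i: "i = (p, r, s)" by (cases i)
  have "\<forall>u v. \<exists>N. \<forall>k<N. Y u v k = 0" using assms by (simp add: nonlocal_va_def)
  then obtain N where "\<forall>k<N. Y (bvec p) (bvec r) k = 0" by blast
  then show ?thesis unfolding zbounded_def i YL_series_def by (intro exI[of _ N]) simp
qed

lemma zbounded_YR_series:
  assumes "nonlocal_va Y vac" shows "zbounded (YR_series Y i)"
proof -
  obtain p r s where i: "i = (p, r, s)" by (cases i)
  have "\<forall>u v. \<exists>N. \<forall>k<N. Y u v k = 0" using assms by (simp add: nonlocal_va_def)
  then obtain N where "\<forall>k<N. Y (bvec r) (bvec s) k = 0" by blast
  then show ?thesis unfolding zbounded_def i YR_series_def by (intro exI[of _ N]) simp
qed

definition xcoeff :: "int \<Rightarrow> ('b \<times> 'b \<Rightarrow>\<^sub>0 complex fls) \<Rightarrow> ('b \<times> 'b \<Rightarrow>\<^sub>0 complex)" where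
  "xcoeff m w = Poly_Mapping.map (\<lambda>f. f $$ m) w"

lemma lookup_xcoeff: "Poly_Mapping.lookup (xcoeff m w) p = Poly_Mapping.lookup w p $$ m"
  by (simp add: xcoeff_def lookup_map)

lemma xcoeff_add: "xcoeff m (a + b) = xcoeff m a + xcoeff m b"
  by (rule poly_mapping_eqI) (simp add: lookup_xcoeff lookup_add)

lemma xcoeff_sum: "xcoeff m (sum f A) = (\<Sum>x\<in>A. xcoeff m (f x))"
  by (rule additive_sum) (rule xcoeff_add)

lemma xcoeff_smul_emb2: "xcoeff m (smul c (emb2 x)) = smul (c $$ m) x"
  by (rule poly_mapping_eqI) (simp add: lookup_xcoeff lookup_emb2)

lemma xcoeff_inject: "(\<And>m. xcoeff m a = xcoeff m b) \<Longrightarrow> a = b"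
  by (rule poly_mapping_eqI, rule fls_eqI) (metis lookup_xcoeff)

lemma xcoeff_zlin_ext:
  assumes "\<And>i m. E i m = emb2 (e i m)"
  shows "xcoeff m (zlin_ext E H n) = (\<Sum>i\<in>Poly_Mapping.keys H.
      \<Sum>k\<in>{k. Poly_Mapping.lookup H i $$ k \<noteq> 0 \<and> e i (n - k) \<noteq> 0}.
        smul (Poly_Mapping.lookup H i $$ k $$ m) (e i (n - k)))"
  unfolding zlin_ext_def zmult_def xcoeff_sum by (simp add: assms xcoeff_smul_emb2)

lemma YL_app_eq_xcoeff: "YL_app Y H m n = xcoeff m (zlin_ext (YL_series Y) H n)"
  unfolding YL_app_def
  by (subst xcoeff_zlin_ext[where e = "\<lambda>(p, r, s) m. tens2 (Y (bvec p) (bvec r) m) (bvec s)"])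
    (simp_all add: YL_series_def tens2_bvec_right_eq_0_iff case_prod_unfold)

lemma YR_app_eq_xcoeff: "YR_app Y H m n = xcoeff m (zlin_ext (YR_series Y) H n)"
  unfolding YR_app_def
  by (subst xcoeff_zlin_ext[where e = "\<lambda>(p, r, s) m. tens2 (bvec p) (Y (bvec r) (bvec s) m)"])
    (simp_all add: YR_series_def tens2_bvec_left_eq_0_iff case_prod_unfold)

lemma lookup_emb3: "Poly_Mapping.lookup (emb3 t) i = fls_const (fls_const (Poly_Mapping.lookup t i))"
  by (simp add: emb3_def lookup_map)

lemma keys_emb3: "Poly_Mapping.keys (emb3 t) = Poly_Mapping.keys t"
  by (auto simp: in_keys_iff lookup_emb3)

lemma zmult_const: "zbounded F \<Longrightarrow> zmult (fls_const c) F n = smul c (F n)"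
  by (subst zmult_superset[of F "{0}"]) (auto split: if_splits)

lemma emb2_smul: "emb2 (smul c a) = smul (fls_const c) (emb2 a)"
  by (rule poly_mapping_eqI) (simp add: lookup_emb2)

lemma emb2_sum: "emb2 (sum f A) = (\<Sum>x\<in>A. emb2 (f x))"
  by (rule additive_sum) (rule poly_mapping_eqI, simp add: lookup_emb2 lookup_add fls_plus_const)

lemma zlin_ext_YL_series_emb3:
  assumes "nonlocal_va Y vac"
  shows "zlin_ext (YL_series Y) (emb3 t) n = emb2 (YL Y t n)"
proof -
  have "zlin_ext (YL_series Y) (emb3 t) n
      = (\<Sum>i\<in>Poly_Mapping.keys t. smul (fls_const (Poly_Mapping.lookup t i)) (YL_series Y i n))"
    by (simp add: zlin_ext_def keys_emb3 lookup_emb3 zmult_const zbounded_YL_series[OF assms])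
  also have "\<dots> = emb2 (YL Y t n)"
    unfolding YL_def emb2_sum by (rule sum.cong) (auto simp: YL_series_def emb2_smul)
  finally show ?thesis .
qed

lemma zlin_ext_YR_series_emb3:
  assumes "nonlocal_va Y vac"
  shows "zlin_ext (YR_series Y) (emb3 t) n = emb2 (YR Y t n)"
proof -
  have "zlin_ext (YR_series Y) (emb3 t) n
      = (\<Sum>i\<in>Poly_Mapping.keys t. smul (fls_const (Poly_Mapping.lookup t i)) (YR_series Y i n))"
    by (simp add: zlin_ext_def keys_emb3 lookup_emb3 zmult_const zbounded_YR_series[OF assms])
  also have "\<dots> = emb2 (YR Y t n)"
    unfolding YR_def emb2_sum by (rule sum.cong) (auto simp: YR_series_def emb2_smul)
  finally show ?thesis .
qed

text \<open>Both sides are \<open>\<complex>((x))((z))\<close>-linear in \<open>H\<close>, so constant tensors \<open>emb3 t\<close> suffice.\<close>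

lemma Sext_zlin_ext_iff_emb3:
  assumes E: "\<And>i. zbounded (E i)"
    and add: "\<And>a b. P (a + b) = P a + P b" and smul: "\<And>g a. P (smul g a) = smul g (P a)"
  shows "(\<forall>t n. Sext S (zlin_ext E (emb3 t) n) = zlin_ext E (P (emb3 t)) n)
     \<longleftrightarrow> (\<forall>H n. Sext S (zlin_ext E H n) = zlin_ext E (P H) n)"
proof (intro iffI allI)
  fix H n
  assume const: "\<forall>t n. Sext S (zlin_ext E (emb3 t) n) = zlin_ext E (P (emb3 t)) n"
  show "Sext S (zlin_ext E H n) = zlin_ext E (P H) n"
  proof (rule zlin_ext_unique[where L = "\<lambda>H n. Sext S (zlin_ext E H n)" and R = "\<lambda>H n. zlin_ext E (P H) n"])
    fix i
    show "(\<lambda>n. Sext S (zlin_ext E (Poly_Mapping.single i 1) n)) = (\<lambda>n. zlin_ext E (P (Poly_Mapping.single i 1)) n)"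
      using const[rule_format, of "Poly_Mapping.single i 1"] by (simp add: emb3_def)
  qed (simp_all add: zlin_ext_add[OF E] zlin_ext_smul[OF E] Sext_add Sext_zmult zbounded_zlin_ext[OF E] add smul)
qed simp

lemma S_YL_iff_zlin_ext:
  assumes Y: "nonlocal_va Y vac" and S: "smap_linear S"
  shows "(\<forall>t. S_YL S Y t = YL_app Y (S23 S Ein (S13 S Eplus (emb3 t))))
     \<longleftrightarrow> (\<forall>H n. Sext S (zlin_ext (YL_series Y) H n) = zlin_ext (YL_series Y) (S23 S Ein (S13 S Eplus H)) n)"
proof -
  have "S_YL S Y t m n = xcoeff m (Sext S (zlin_ext (YL_series Y) (emb3 t) n))" for t m n
    by (simp add: S_YL_def xcoeff_def zlin_ext_YL_series_emb3[OF Y] Sext_emb2[OF S])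
  then have "(\<forall>t. S_YL S Y t = YL_app Y (S23 S Ein (S13 S Eplus (emb3 t))))
     \<longleftrightarrow> (\<forall>t n. Sext S (zlin_ext (YL_series Y) (emb3 t) n)
                = zlin_ext (YL_series Y) (S23 S Ein (S13 S Eplus (emb3 t))) n)"
    by (auto simp: fun_eq_iff YL_app_eq_xcoeff intro: xcoeff_inject)
  also have "\<dots> \<longleftrightarrow> (\<forall>H n. Sext S (zlin_ext (YL_series Y) H n) = zlin_ext (YL_series Y) (S23 S Ein (S13 S Eplus H)) n)"
    by (rule Sext_zlin_ext_iff_emb3[OF zbounded_YL_series[OF Y]])
      (simp_all add: S23_eq_leg S13_eq_leg lin_ext_add lin_ext_smul)
  finally show ?thesis .
qed

lemma S_YR_iff_zlin_ext:
  assumes Y: "nonlocal_va Y vac" and S: "smap_linear S"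
  shows "(\<forall>t. S_YR S Y t = YR_app Y (S12 S Eminus (S13 S Ein (emb3 t))))
     \<longleftrightarrow> (\<forall>H n. Sext S (zlin_ext (YR_series Y) H n) = zlin_ext (YR_series Y) (S12 S Eminus (S13 S Ein H)) n)"
proof -
  have "S_YR S Y t m n = xcoeff m (Sext S (zlin_ext (YR_series Y) (emb3 t) n))" for t m n
    by (simp add: S_YR_def xcoeff_def zlin_ext_YR_series_emb3[OF Y] Sext_emb2[OF S])
  then have "(\<forall>t. S_YR S Y t = YR_app Y (S12 S Eminus (S13 S Ein (emb3 t))))
     \<longleftrightarrow> (\<forall>t n. Sext S (zlin_ext (YR_series Y) (emb3 t) n)
                = zlin_ext (YR_series Y) (S12 S Eminus (S13 S Ein (emb3 t))) n)"
    by (auto simp: fun_eq_iff YR_app_eq_xcoeff intro: xcoeff_inject)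
  also have "\<dots> \<longleftrightarrow> (\<forall>H n. Sext S (zlin_ext (YR_series Y) H n) = zlin_ext (YR_series Y) (S12 S Eminus (S13 S Ein H)) n)"
    by (rule Sext_zlin_ext_iff_emb3[OF zbounded_YR_series[OF Y]])
      (simp_all add: S12_eq_leg S13_eq_leg lin_ext_add lin_ext_smul)
  finally show ?thesis .
qed

section \<open>Compatibility of \<open>S\<close> with the vertex operator\<close>

lemma S_Y_compat_iff_inverse:
  assumes "unitary S"
  shows "(\<forall>H n. Sext S (zlin_ext E H n) = zlin_ext E (S23 S Ein (S13 S Eplus H)) n)
     \<longleftrightarrow> (\<forall>G n. Sext (Sinv S) (zlin_ext E G n) = zlin_ext E (S13 (Sinv S) Eplus (S23 (Sinv S) Ein G)) n)"
proof -
  have ST: "Sext S (Sinv S (Poly_Mapping.single p 1)) = emb2 (Poly_Mapping.single p 1)" for p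
    using assms by (simp add: unitary_def)
  note TS = Sext_Sinv_single[OF assms]
  show ?thesis
  proof (intro iffI allI)
    fix G n
    assume compat: "\<forall>H n. Sext S (zlin_ext E H n) = zlin_ext E (S23 S Ein (S13 S Eplus H)) n"
    define H where "H = S13 (Sinv S) Eplus (S23 (Sinv S) Ein G)"
    have "S23 S Ein (S13 S Eplus H) = G"
      unfolding H_def by (simp add: S13_inverse[OF is_ring_hom_Eplus ST] S23_inverse[OF is_ring_hom_Ein ST])
    then have "Sext (Sinv S) (Sext S (zlin_ext E H n)) = Sext (Sinv S) (zlin_ext E G n)"
      using compat by simp
    then show "Sext (Sinv S) (zlin_ext E G n) = zlin_ext E (S13 (Sinv S) Eplus (S23 (Sinv S) Ein G)) n"
      by (simp add: Sext_Sinv_Sext[OF assms] H_def)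
  next
    fix H n
    assume compat: "\<forall>G n. Sext (Sinv S) (zlin_ext E G n) = zlin_ext E (S13 (Sinv S) Eplus (S23 (Sinv S) Ein G)) n"
    define G where "G = S23 S Ein (S13 S Eplus H)"
    have "S13 (Sinv S) Eplus (S23 (Sinv S) Ein G) = H"
      unfolding G_def by (simp add: S13_inverse[OF is_ring_hom_Eplus TS] S23_inverse[OF is_ring_hom_Ein TS])
    then have "Sext S (Sext (Sinv S) (zlin_ext E G n)) = Sext S (zlin_ext E H n)"
      using compat by simp
    then show "Sext S (zlin_ext E H n) = zlin_ext E (S23 S Ein (S13 S Eplus H)) n"
      by (simp add: Sext_Sext_Sinv[OF assms] G_def)
  qed
qed

definition rotate3 :: "('b \<times> 'b \<times> 'b \<Rightarrow>\<^sub>0 'r::zero) \<Rightarrow> ('b \<times> 'b \<times> 'b \<Rightarrow>\<^sub>0 'r)" where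
  "rotate3 X = Poly_Mapping.Abs_poly_mapping (\<lambda>(x, y, z). Poly_Mapping.lookup X (z, x, y))"

definition negvar3 :: "'b t3 \<Rightarrow> 'b t3" where
  "negvar3 X = Poly_Mapping.map negvar_inner X"

lemma lookup_rotate3 [simp]: "Poly_Mapping.lookup (rotate3 X) (x, y, z) = Poly_Mapping.lookup X (z, x, y)"
proof -
  have "{v. (case v of (x, y, z) \<Rightarrow> Poly_Mapping.lookup X (z, x, y)) \<noteq> 0}
      = (\<lambda>(a, b, c). (b, c, a)) ` Poly_Mapping.keys X"
    by (force simp: in_keys_iff image_iff)
  then show ?thesis by (simp add: rotate3_def)
qed

lemma keys_rotate3: "Poly_Mapping.keys (rotate3 X) = (\<lambda>(a, b, c). (b, c, a)) ` Poly_Mapping.keys X"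
  by (force simp: in_keys_iff image_iff)

lemma lookup_rotate3_split: "Poly_Mapping.lookup (rotate3 X) i = Poly_Mapping.lookup X (snd (snd i), fst i, fst (snd i))"
  by (cases i) simp

lemma rotate3_single: "rotate3 (Poly_Mapping.single (a, b, c) g) = Poly_Mapping.single (b, c, a) g"
  by (rule poly_mapping_eqI) (auto simp: lookup_rotate3_split lookup_single when_def prod_eq_iff)

lemma rotate3_rotate3_rotate3 [simp]: "rotate3 (rotate3 (rotate3 X)) = X"
  by (rule poly_mapping_eqI) auto

lemma lookup_negvar3 [simp]: "Poly_Mapping.lookup (negvar3 X) i = negvar_inner (Poly_Mapping.lookup X i)"
  by (simp add: negvar3_def lookup_map)

lemma keys_negvar3 [simp]: "Poly_Mapping.keys (negvar3 X) = Poly_Mapping.keys X"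
  by (auto simp: in_keys_iff)

lemma negvar3_negvar3 [simp]: "negvar3 (negvar3 X) = X"
  by (rule poly_mapping_eqI) simp

lemma zlin_ext_YR_series_eq_flip2:
  assumes "nonlocal_va Y vac"
  shows "zlin_ext (YR_series Y) G n = flip2 (zlin_ext (YL_series Y) (rotate3 G) n)"
proof -
  have "zlin_ext (YL_series Y) (rotate3 G) n
      = (\<Sum>i\<in>Poly_Mapping.keys G. zmult (Poly_Mapping.lookup G i) (YL_series Y (case i of (a, b, c) \<Rightarrow> (b, c, a))) n)"
    unfolding zlin_ext_def keys_rotate3
    by (subst sum.reindex) (auto simp: inj_on_def split_beta lookup_rotate3_split prod_eq_iff)
  then have "flip2 (zlin_ext (YL_series Y) (rotate3 G) n) = (\<Sum>i\<in>Poly_Mapping.keys G.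
      zmult (Poly_Mapping.lookup G i) (\<lambda>m. flip2 (YL_series Y (case i of (a, b, c) \<Rightarrow> (b, c, a)) m)) n)"
    by (simp add: flip2_sum flip2_zmult zbounded_YL_series[OF assms])
  moreover have "(\<lambda>m. flip2 (YL_series Y (case i of (a, b, c) \<Rightarrow> (b, c, a)) m)) = YR_series Y i" for i
    by (auto simp: YL_series_def YR_series_def emb2_def flip2_map flip2_tens2 split: prod.split)
  ultimately show ?thesis by (simp add: zlin_ext_def)
qed

lemma map_negvar_zlin_ext_YL_series:
  assumes "nonlocal_va Y vac"
  shows "Poly_Mapping.map negvar (zlin_ext (YL_series Y) H n) = zlin_ext (YL_series Y) (negvar3 H) n"
proof -
  have "Poly_Mapping.map negvar (YL_series Y i m) = YL_series Y i m" for i m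
    by (rule poly_mapping_eqI) (simp add: YL_series_def split_beta lookup_map lookup_emb2)
  then show ?thesis
    by (simp add: zlin_ext_def additive_sum[OF map_negvar_add] map_negvar_zmult zbounded_YL_series[OF assms])
qed

lemma Ein_0 [simp]: "Ein 0 = 0"
  by (simp add: Ein_def)

lemma Eplus_0 [simp]: "Eplus 0 = 0"
  by (rule is_ring_hom_0[OF is_ring_hom_Eplus])

lemma Eminus_0 [simp]: "Eminus 0 = 0"
  by (rule fls_eqI, rule fls_eqI) (simp add: Eminus_nth_nth)

lemma lookup_S13_S23_Sinv_single:
  "Poly_Mapping.lookup (S13 (Sinv S) Eplus (S23 (Sinv S) Ein (Poly_Mapping.single (b, c, a) 1))) (p, q, s) =
    (\<Sum>x\<in>Poly_Mapping.keys (S (Poly_Mapping.single (a, c) 1)).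
       Ein (negvar (Poly_Mapping.lookup (S (Poly_Mapping.single (a, c) 1)) x)) *
       (if q = snd x then Eplus (negvar (Poly_Mapping.lookup (S (Poly_Mapping.single (fst x, b) 1)) (s, p))) else 0))"
proof -
  let ?T = "Sinv S"
  let ?W = "?T (Poly_Mapping.single (c, a) 1)"
  have "Poly_Mapping.lookup (S13 ?T Eplus (S23 ?T Ein (Poly_Mapping.single (b, c, a) 1))) (p, q, s)
      = (\<Sum>x\<in>(\<lambda>r. (b, fst r, snd r)) ` Poly_Mapping.keys ?W.
           Poly_Mapping.lookup (leg split23 ?T Ein (b, c, a)) x * Poly_Mapping.lookup (leg split13 ?T Eplus x) (p, q, s))"
    unfolding S13_eq_leg S23_eq_leg lin_ext_single smul_one
    by (rule lookup_lin_ext_superset)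
      (use keys_leg[where \<phi> = Ein and K = "Sinv S" and i = "(b, c, a)", OF Ein_0 bij_split23] in \<open>simp_all add: inv_split23\<close>)
  also have "\<dots> = (\<Sum>y\<in>Poly_Mapping.keys ?W. Ein (Poly_Mapping.lookup ?W y) *
       (if q = fst y then Eplus (Poly_Mapping.lookup (?T (Poly_Mapping.single (b, snd y) 1)) (p, s)) else 0))"
    by (subst sum.reindex) (auto simp: inj_on_def prod_eq_iff lookup_leg[OF _ bij_split23]
        lookup_leg[OF _ bij_split13] intro!: sum.cong)
  also have "\<dots> = (\<Sum>x\<in>Poly_Mapping.keys (S (Poly_Mapping.single (a, c) 1)).
       Ein (negvar (Poly_Mapping.lookup (S (Poly_Mapping.single (a, c) 1)) x)) *
       (if q = snd x then Eplus (negvar (Poly_Mapping.lookup (S (Poly_Mapping.single (fst x, b) 1)) (s, p))) else 0))"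
    by (simp add: Sinv_eq_flip_neg flip2_single keys_flip_neg lookup_flip_neg sum.reindex cong: if_cong)
  finally show ?thesis .
qed

lemma lookup_S12_S13_single:
  "Poly_Mapping.lookup (S12 S Eminus (S13 S Ein (Poly_Mapping.single (a, b, c) 1))) (s, p, q) =
    (\<Sum>x\<in>Poly_Mapping.keys (S (Poly_Mapping.single (a, c) 1)).
       Ein (Poly_Mapping.lookup (S (Poly_Mapping.single (a, c) 1)) x) *
       (if q = snd x then Eminus (Poly_Mapping.lookup (S (Poly_Mapping.single (fst x, b) 1)) (s, p)) else 0))"
proof -
  let ?W = "S (Poly_Mapping.single (a, c) 1)"
  have "Poly_Mapping.lookup (S12 S Eminus (S13 S Ein (Poly_Mapping.single (a, b, c) 1))) (s, p, q)
      = (\<Sum>x\<in>(\<lambda>r. (fst r, b, snd r)) ` Poly_Mapping.keys ?W.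
           Poly_Mapping.lookup (leg split13 S Ein (a, b, c)) x * Poly_Mapping.lookup (leg split12 S Eminus x) (s, p, q))"
    unfolding S12_eq_leg S13_eq_leg lin_ext_single smul_one
    by (rule lookup_lin_ext_superset)
      (use keys_leg[where \<phi> = Ein and K = S and i = "(a, b, c)", OF Ein_0 bij_split13] in \<open>simp_all add: inv_split13\<close>)
  also have "\<dots> = (\<Sum>x\<in>Poly_Mapping.keys ?W. Ein (Poly_Mapping.lookup ?W x) *
       (if q = snd x then Eminus (Poly_Mapping.lookup (S (Poly_Mapping.single (fst x, b) 1)) (s, p)) else 0))"
    by (subst sum.reindex) (auto simp: inj_on_def prod_eq_iff lookup_leg[OF _ bij_split13]
        lookup_leg[OF _ bij_split12] intro!: sum.cong)
  finally show ?thesis .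
qed

text \<open>With \<open>S\<^sup>-\<^sup>1(x) = \<sigma>S(-x)\<sigma>\<close>, relabelling the factors cyclically and negating \<open>x\<close> turns
  \<open>S\<^sup>-\<^sup>1\<^sup>,\<^sup>1\<^sup>3(x + z) S\<^sup>-\<^sup>1\<^sup>,\<^sup>2\<^sup>3(x)\<close> into \<open>S\<^sup>1\<^sup>2(x - z) S\<^sup>1\<^sup>3(x)\<close>; this is where \<open>f(x - z)\<close> comes from.\<close>

lemma negvar3_S13_S23_Sinv:
  fixes S :: "'b smap"
  shows "negvar3 (S13 (Sinv S) Eplus (S23 (Sinv S) Ein (negvar3 (rotate3 X)))) = rotate3 (S12 S Eminus (S13 S Ein X))"
proof -
  let ?F = "\<lambda>X. negvar3 (S13 (Sinv S) Eplus (S23 (Sinv S) Ein (negvar3 (rotate3 X))))"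
  let ?G = "\<lambda>X. rotate3 (S12 S Eminus (S13 S Ein X))"
  have rotate3_add: "rotate3 (a + b) = rotate3 a + rotate3 b" for a b :: "'b t3"
    by (rule poly_mapping_eqI) (simp add: lookup_rotate3_split lookup_add)
  have rotate3_smul: "rotate3 (smul g a) = smul g (rotate3 a)" for g and a :: "'b t3"
    by (rule poly_mapping_eqI) (simp add: lookup_rotate3_split)
  have negvar3_add: "negvar3 (a + b) = negvar3 a + negvar3 b" for a b :: "'b t3"
    by (rule poly_mapping_eqI) (simp add: lookup_add negvar_inner_add)
  have negvar3_smul: "negvar3 (smul g a) = smul (negvar_inner g) (negvar3 a)" for g and a :: "'b t3"
    by (rule poly_mapping_eqI) (simp add: negvar_inner_mult)
  have "?F X = lin_ext (\<lambda>i. ?F (Poly_Mapping.single i 1)) X"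
    by (rule lin_ext_unique)
      (simp_all add: rotate3_add negvar3_add S13_eq_leg S23_eq_leg lin_ext_add rotate3_smul negvar3_smul lin_ext_smul)
  moreover have "?G X = lin_ext (\<lambda>i. ?G (Poly_Mapping.single i 1)) X"
    by (rule lin_ext_unique) (simp_all add: rotate3_add S13_eq_leg S12_eq_leg lin_ext_add rotate3_smul lin_ext_smul)
  moreover have "?F (Poly_Mapping.single i 1) = ?G (Poly_Mapping.single i 1)" for i
  proof (rule poly_mapping_eqI)
    fix j :: "'b \<times> 'b \<times> 'b"
    obtain a b c where i: "i = (a, b, c)" by (cases i)
    obtain p q s where j: "j = (p, q, s)" by (cases j)
    have "negvar3 (Poly_Mapping.single (b, c, a) 1) = Poly_Mapping.single (b, c, a) 1"
      by (rule poly_mapping_eqI) (simp add: lookup_single when_def)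
    then show "Poly_Mapping.lookup (?F (Poly_Mapping.single i 1)) j = Poly_Mapping.lookup (?G (Poly_Mapping.single i 1)) j"
      by (simp add: i j rotate3_single lookup_S13_S23_Sinv_single lookup_S12_S13_single negvar_inner_sum
          negvar_inner_mult negvar_inner_Ein negvar_inner_Eplus if_distrib[of negvar_inner] cong: if_cong)
  qed
  ultimately show ?thesis by simp
qed

lemma Sext_flip2: "Sext S (flip2 w) = flip2 (Poly_Mapping.map negvar (Sext (Sinv S) (Poly_Mapping.map negvar w)))"
  using Sext_Sinv_eq_flip_neg[of "Sinv S" "flip2 w"] by (simp add: flip_neg_def flip2_map)

lemma S_YR_compat_iff_Sinv_YL_compat:
  assumes Y: "nonlocal_va Y vac"
  shows "Sext S (zlin_ext (YR_series Y) H n) = zlin_ext (YR_series Y) (S12 S Eminus (S13 S Ein H)) n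
     \<longleftrightarrow> Sext (Sinv S) (zlin_ext (YL_series Y) (negvar3 (rotate3 H)) n)
           = zlin_ext (YL_series Y) (S13 (Sinv S) Eplus (S23 (Sinv S) Ein (negvar3 (rotate3 H)))) n"
proof -
  let ?G = "negvar3 (rotate3 H)"
  have "Sext S (zlin_ext (YR_series Y) H n)
      = flip2 (Poly_Mapping.map negvar (Sext (Sinv S) (zlin_ext (YL_series Y) ?G n)))"
    by (simp add: zlin_ext_YR_series_eq_flip2[OF Y] Sext_flip2 map_negvar_zlin_ext_YL_series[OF Y])
  moreover have "zlin_ext (YR_series Y) (S12 S Eminus (S13 S Ein H)) n
      = flip2 (Poly_Mapping.map negvar (zlin_ext (YL_series Y) (S13 (Sinv S) Eplus (S23 (Sinv S) Ein ?G)) n))"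
    by (simp add: zlin_ext_YR_series_eq_flip2[OF Y] map_negvar_zlin_ext_YL_series[OF Y]
        negvar3_S13_S23_Sinv[symmetric])
  moreover have "Poly_Mapping.map negvar (Poly_Mapping.map negvar w) = w" for w
    by (rule poly_mapping_eqI) (simp add: lookup_map)
  ultimately show ?thesis
    by (metis flip2_flip2)
qed

lemma Sinv_YL_compat_iff_S_YR_compat:
  assumes "nonlocal_va Y vac"
  shows "(\<forall>G n. Sext (Sinv S) (zlin_ext (YL_series Y) G n) = zlin_ext (YL_series Y) (S13 (Sinv S) Eplus (S23 (Sinv S) Ein G)) n)
     \<longleftrightarrow> (\<forall>H n. Sext S (zlin_ext (YR_series Y) H n) = zlin_ext (YR_series Y) (S12 S Eminus (S13 S Ein H)) n)"
proof -
  have "\<exists>H. G = negvar3 (rotate3 H)" for G :: "'b t3"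
    by (intro exI[of _ "rotate3 (rotate3 (negvar3 G))"]) simp
  then show ?thesis
    using S_YR_compat_iff_Sinv_YL_compat[OF assms, of S] by metis
qed

theorem lemma3p6:
  fixes Y :: "'b vop" and vac :: "'b \<Rightarrow>\<^sub>0 complex" and S :: "'b smap"
  assumes "nonlocal_va Y vac"
    and "smap_linear S"
    and "qybe S"
    and "unitary S"
  shows "((\<forall>v. S (tens2 vac v) = emb2 (tens2 vac v)) \<longleftrightarrow> (\<forall>v. S (tens2 v vac) = emb2 (tens2 v vac)))
       \<and> ((\<forall>t. tensL fls_const (vD Y vac) (S t) - S (tensL (\<lambda>c. c) (vD Y vac) t) = - ddx (S t))
           \<longleftrightarrow> (\<forall>t. tensR fls_const (vD Y vac) (Sinv S t) - Sinv S (tensR (\<lambda>c. c) (vD Y vac) t)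
                   = ddx (Sinv S t)))
       \<and> ((\<forall>t. S_YL S Y t = YL_app Y (S23 S Ein (S13 S Eplus (emb3 t))))
           \<longleftrightarrow> (\<forall>t. S_YR S Y t = YR_app Y (S12 S Eminus (S13 S Ein (emb3 t)))))"
proof (intro conjI)
  show "(\<forall>v. S (tens2 vac v) = emb2 (tens2 vac v)) \<longleftrightarrow> (\<forall>v. S (tens2 v vac) = emb2 (tens2 v vac))"
    using assms(2,4) by (rule vacuum_left_iff_right)
  show "(\<forall>t. tensL fls_const (vD Y vac) (S t) - S (tensL (\<lambda>c. c) (vD Y vac) t) = - ddx (S t))
      \<longleftrightarrow> (\<forall>t. tensR fls_const (vD Y vac) (Sinv S t) - Sinv S (tensR (\<lambda>c. c) (vD Y vac) t) = ddx (Sinv S t))"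
    by (rule commutator_deriv_iff_inverse)
  show "(\<forall>t. S_YL S Y t = YL_app Y (S23 S Ein (S13 S Eplus (emb3 t))))
      \<longleftrightarrow> (\<forall>t. S_YR S Y t = YR_app Y (S12 S Eminus (S13 S Ein (emb3 t))))"
    by (simp only: S_YL_iff_zlin_ext[OF assms(1,2)] S_Y_compat_iff_inverse[OF assms(4)]
        Sinv_YL_compat_iff_S_YR_compat[OF assms(1)] S_YR_iff_zlin_ext[OF assms(1,2)])
qed
end
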